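(* Let $d\ge 3$, $\Omega=\{1,\dots,d\}$, and $F\le F'\le \mathrm{Sym}(\Omega)$ with $F'$ preserving the orbits of $F$. Assume that $F$ acts freely on $\Omega$. Then every finitely generated subgroup $H$ of $G(F,F')$ which is isomorphic to a direct product $A\times B$ of two nontrivial groups is finite.
   Context: Let $T=\mathcal{T}_d$ be the $d$-regular tree. Fix a coloring $c\colon E(T)\to\Omega$ of its edges such that for every vertex $v$ the restriction $c_v$ to the set $E(v)$ of edges containing $v$ is a bijection onto $\Omega$. For $g\in\mathrm{Aut}(T)$ the local permutation at $v$ is $\sigma(g,v)=c_{gv}\circ g_v\circ c_v^{-1}$, where $g_v\colon E(v)\to E(gv)$ is induced by $g$. $U(F')=\{g:\sigma(g,v)\in F'\ \forall v\}$, $G(F)=\{g:\sigma(g,v)\in F \text{ for all but finitely many } v\}$, and $G(F,F')=G(F)\cap U(F')$. *)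

theory Defs
  imports "HOL-Algebra.Algebra"
begin

definition Omg :: "nat \<Rightarrow> nat set" where
  "Omg d = {1..d}"

text \<open>Concrete model of the d-regular tree: vertices are the reduced words over
  Omega (no two consecutive letters equal); w and w @ [a] are adjacent.\<close>
definition TV :: "nat \<Rightarrow> nat list set" where
  "TV d = {xs. set xs \<subseteq> Omg d \<and> (\<forall>i. Suc i < length xs \<longrightarrow> xs ! i \<noteq> xs ! Suc i)}"

definition tadj :: "nat \<Rightarrow> nat list \<Rightarrow> nat list \<Rightarrow> bool" where
  "tadj d v w \<longleftrightarrow> v \<in> TV d \<and> w \<in> TV d \<and> ((\<exists>a. w = v @ [a]) \<or> (\<exists>a. v = w @ [a]))"

definition TE :: "nat \<Rightarrow> nat list set set" where
  "TE d = {{v, w} | v w. tadj d v w}"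

definition Ev :: "nat \<Rightarrow> nat list \<Rightarrow> nat list set set" where
  "Ev d v = {e \<in> TE d. v \<in> e}"

definition legal_coloring :: "nat \<Rightarrow> (nat list set \<Rightarrow> nat) \<Rightarrow> bool" where
  "legal_coloring d c \<longleftrightarrow> (\<forall>v \<in> TV d. bij_betw c (Ev d v) (Omg d))"

definition AutT :: "nat \<Rightarrow> (nat list \<Rightarrow> nat list) set" where
  "AutT d = {g \<in> Bij (TV d). \<forall>v \<in> TV d. \<forall>w \<in> TV d. tadj d v w \<longleftrightarrow> tadj d (g v) (g w)}"

text \<open>Local permutation sigma(g,v) = c_{gv} o g_v o c_v^{-1}, an element of Sym(Omega)
  (extensional on Omega, as in BijGroup).\<close>
definition locperm :: "nat \<Rightarrow> (nat list set \<Rightarrow> nat) \<Rightarrow> (nat list \<Rightarrow> nat list) \<Rightarrow> nat list \<Rightarrow> nat \<Rightarrow> nat" where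
  "locperm d c g v = restrict (\<lambda>a. c (g ` (THE e. e \<in> Ev d v \<and> c e = a))) (Omg d)"

definition U_grp :: "nat \<Rightarrow> (nat list set \<Rightarrow> nat) \<Rightarrow> (nat \<Rightarrow> nat) set \<Rightarrow> (nat list \<Rightarrow> nat list) set" where
  "U_grp d c F' = {g \<in> AutT d. \<forall>v \<in> TV d. locperm d c g v \<in> F'}"

definition G_grp :: "nat \<Rightarrow> (nat list set \<Rightarrow> nat) \<Rightarrow> (nat \<Rightarrow> nat) set \<Rightarrow> (nat list \<Rightarrow> nat list) set" where
  "G_grp d c F = {g \<in> AutT d. finite {v \<in> TV d. locperm d c g v \<notin> F}}"

definition GFF :: "nat \<Rightarrow> (nat list set \<Rightarrow> nat) \<Rightarrow> (nat \<Rightarrow> nat) set \<Rightarrow> (nat \<Rightarrow> nat) set \<Rightarrow> (nat list \<Rightarrow> nat list) set" where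
  "GFF d c F F' = G_grp d c F \<inter> U_grp d c F'"

definition preserves_orbits :: "nat set \<Rightarrow> (nat \<Rightarrow> nat) set \<Rightarrow> (nat \<Rightarrow> nat) set \<Rightarrow> bool" where
  "preserves_orbits \<Omega> F F' \<longleftrightarrow> (\<forall>f' \<in> F'. \<forall>a \<in> \<Omega>. \<exists>f \<in> F. f' a = f a)"

definition acts_freely :: "nat set \<Rightarrow> (nat \<Rightarrow> nat) set \<Rightarrow> bool" where
  "acts_freely \<Omega> F \<longleftrightarrow> (\<forall>f \<in> F. \<forall>a \<in> \<Omega>. f a = a \<longrightarrow> (\<forall>b \<in> \<Omega>. f b = b))"

end

theory Submission
  imports Defs
begin

text \<open>The tree is modelled by reduced words with the metric |u| + |v| - 2 |lcp u v|, which
  satisfies the four-point condition. An automorphism is elliptic (it fixes a vertex) or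
  hyperbolic (it translates an axis), and a type-preserving one without an axis is elliptic.

  Elements of G(F) have local permutations in F outside finitely many singular vertices, and
  F acts freely. Hence: (1) such an element fixing a vertex and commuting with a hyperbolic
  element is trivial, since fixed edges propagate away from the singularities; (2) finitely
  many such elements with a common fixed vertex generate a finite group, each element being
  determined by its action on a ball; (3) by Schreier's lemma, Serre's lemma and Helly's
  theorem for subtrees, an infinite finitely generated group of such elements contains a
  hyperbolic element.

  If H = A \<times> B were infinite, one factor, say A, is infinite and finitely generated and so
  contains a hyperbolic a with an axis point y. A nontrivial b in B commutes with a, hence
  translates its axis: b^l y = a^s y, where l is the translation length of a. By (1),
  b^l = a^s lies in A \<inter> B = 1, so s = 0, b fixes y, and by (1) again b = 1.\<close>

section \<open>The tree metric on words\<close>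

fun lcp_len :: "'a list \<Rightarrow> 'a list \<Rightarrow> nat" where
  "lcp_len (x#xs) (y#ys) = (if x = y then Suc (lcp_len xs ys) else 0)"
| "lcp_len _ _ = 0"

definition tdist :: "'a list \<Rightarrow> 'a list \<Rightarrow> nat" where
  "tdist u v = length u + length v - 2 * lcp_len u v"

lemma lcp_len_le_length1: "lcp_len u v \<le> length u"
  by (induction u v rule: lcp_len.induct) auto

lemma lcp_len_le_length2: "lcp_len u v \<le> length v"
  by (induction u v rule: lcp_len.induct) auto

lemma lcp_len_comm: "lcp_len u v = lcp_len v u"
  by (induction u v rule: lcp_len.induct) auto

lemma lcp_len_self [simp]: "lcp_len u u = length u"
  by (induction u) auto

lemma lcp_len_ge_iff: "n \<le> lcp_len u v \<longleftrightarrow> n \<le> length u \<and> n \<le> length v \<and> take n u = take n v"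
proof (induction u v arbitrary: n rule: lcp_len.induct)
  case (1 x xs y ys)
  then show ?case by (cases n) auto
qed auto

lemma lcp_len_ultrametric: "min (lcp_len x y) (lcp_len y z) \<le> lcp_len x z"
  by (metis lcp_len_ge_iff min.cobounded1 min.cobounded2 order.trans)

lemma lcp_len_take_left: "lcp_len (take k u) v = min k (lcp_len u v)"
proof (induction u arbitrary: k v)
  case (Cons x xs)
  then show ?case by (cases k; cases v) auto
qed simp

lemma lcp_len_take_right: "lcp_len u (take k v) = min k (lcp_len u v)"
  using lcp_len_take_left[of k v u] by (simp add: lcp_len_comm)

lemma of_nat_tdist: "int (tdist u v) = int (length u) + int (length v) - 2 * int (lcp_len u v)"
  unfolding tdist_def using lcp_len_le_length1[of u v] lcp_len_le_length2[of u v] by simp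

lemma tdist_comm: "tdist u v = tdist v u"
  unfolding tdist_def by (simp add: lcp_len_comm)

lemma tdist_self [simp]: "tdist u u = 0"
  unfolding tdist_def by simp

lemma tdist_eq_0_iff: "tdist u v = 0 \<longleftrightarrow> u = v"
proof
  assume "tdist u v = 0"
  then have "lcp_len u v = length u" "lcp_len u v = length v"
    using lcp_len_le_length1[of u v] lcp_len_le_length2[of u v] unfolding tdist_def by auto
  then show "u = v" using lcp_len_ge_iff[of "length u" u v] by auto
qed simp

text \<open>A, ..., G stand for the six common prefix lengths among four words; the hypotheses
  are the ultrametric inequalities for the four triangles.\<close>

lemma four_point_of_ultrametric:
  fixes A B C D E G :: nat
  assumes t1: "A \<ge> min C G" "C \<ge> min A G" "G \<ge> min A C"
    and t2: "A \<ge> min E D" "E \<ge> min A D" "D \<ge> min A E"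
    and t3: "C \<ge> min E B" "E \<ge> min C B" "B \<ge> min C E"
    and t4: "G \<ge> min D B" "D \<ge> min G B" "B \<ge> min G D"
  shows "A + B \<ge> C + D \<or> A + B \<ge> E + G"
proof -
  consider "A \<ge> C \<and> B \<ge> D" | "A \<ge> G \<and> B \<ge> E" | "B < D \<and> B < E" | "A < C \<and> B \<ge> D \<and> B < E"
    | "B < D \<and> A \<ge> C \<and> A < G \<and> B \<ge> E"
    by (cases "D \<le> B"; cases "E \<le> B"; cases "G \<le> A"; cases "C \<le> A")
      (use t1(1) in \<open>auto simp: min_def split: if_splits\<close>)
  then show ?thesis
  proof cases
    case 3
    then have "B \<ge> G" "B \<ge> C" using t3(3) t4(3) by (auto simp: min_def split: if_splits)
    then have "C = B" "G = B" using 3 t3(1) t4(1) by (auto simp: min_def split: if_splits)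
    then show ?thesis using t1(1) t2(1) by (auto simp: min_def split: if_splits)
  next
    case 4
    then have "A \<ge> G" "B \<ge> C" using t1(1) t3(3) by (auto simp: min_def split: if_splits)
    then have "G = A" using 4 t1(3) by (auto simp: min_def split: if_splits)
    then have "D = A" using 4 t4 \<open>A \<ge> G\<close> \<open>B \<ge> C\<close> by (auto simp: min_def split: if_splits)
    then show ?thesis using \<open>B \<ge> C\<close> by simp
  next
    case 5
    then have "C = A" "B \<ge> G" using t1(2) t4(3) by (auto simp: min_def split: if_splits)
    then have "E = A" using 5 t3(1) t3(2) by (auto simp: min_def split: if_splits)
    then show ?thesis using \<open>B \<ge> G\<close> by simp
  qed auto
qed

lemma tdist_four_point:
  "tdist x y + tdist z w \<le> max (tdist x z + tdist y w) (tdist x w + tdist y z)"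
proof -
  have ultra: "\<And>a b c. lcp_len a c \<ge> min (lcp_len a b) (lcp_len b c)"
    using lcp_len_ultrametric by metis
  have "lcp_len x y + lcp_len z w \<ge> lcp_len x z + lcp_len y w
      \<or> lcp_len x y + lcp_len z w \<ge> lcp_len x w + lcp_len y z"
    by (rule four_point_of_ultrametric) (use ultra lcp_len_comm in metis)+
  then have "int (tdist x y + tdist z w)
      \<le> max (int (tdist x z + tdist y w)) (int (tdist x w + tdist y z))"
    unfolding of_nat_add of_nat_tdist
    by (simp add: lcp_len_comm[of z x] lcp_len_comm[of w y] max_def) linarith?
  then show ?thesis by linarith
qed

lemma tdist_four_point_disj:
  "tdist x y + tdist z w \<le> tdist x z + tdist y w \<or> tdist x y + tdist z w \<le> tdist x w + tdist y z"
  using tdist_four_point[of x y z w] by linarith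

lemma tdist_four_point_le_xw:
  "tdist x z + tdist y w < tdist x y + tdist z w \<Longrightarrow> tdist x y + tdist z w \<le> tdist x w + tdist y z"
  using tdist_four_point[of x y z w] by linarith

lemma tdist_four_point_le_xz:
  "tdist x w + tdist y z < tdist x y + tdist z w \<Longrightarrow> tdist x y + tdist z w \<le> tdist x z + tdist y w"
  using tdist_four_point[of x y z w] by linarith

lemma tdist_triangle: "tdist x z \<le> tdist x y + tdist y z"
  using tdist_four_point[of x z y y] by (simp add: tdist_comm max_def split: if_splits)

lemma tdist_parity: "even (tdist u v + length u + length v)"
proof -
  have "tdist u v + 2 * lcp_len u v = length u + length v"
    unfolding tdist_def using lcp_len_le_length1[of u v] lcp_len_le_length2[of u v] by simp
  then have "tdist u v + length u + length v = 2 * (length u + length v - lcp_len u v)"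
    by simp
  then show ?thesis by simp
qed

section \<open>Geodesics and automorphisms\<close>

lemma take_in_TV: "u \<in> TV d \<Longrightarrow> take k u \<in> TV d"
  unfolding TV_def by (auto dest: in_set_takeD)

lemma tdist_geodesic_point:
  assumes "u \<in> TV d" "v \<in> TV d" "t \<le> tdist u v"
  shows "\<exists>w\<in>TV d. tdist u w = t \<and> tdist w v = tdist u v - t"
proof -
  define l where "l = lcp_len u v"
  obtain a where ua: "length u = l + a" using lcp_len_le_length1[of u v] unfolding l_def using le_Suc_ex by blast
  obtain b where vb: "length v = l + b" using lcp_len_le_length2[of u v] unfolding l_def using le_Suc_ex by blast
  have dd: "tdist u v = a + b" unfolding tdist_def l_def[symmetric] ua vb by simp
  show ?thesis
  proof (cases "t \<le> a")
    case True
    define k where "k = l + (a - t)"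
    have len: "length (take k u) = k" using True ua by (simp add: k_def)
    have "lcp_len u (take k u) = k" using lcp_len_take_right[of u k u] ua by (simp add: k_def)
    then have "tdist u (take k u) = l + a - k" unfolding tdist_def len ua by simp
    then have 1: "tdist u (take k u) = t" unfolding k_def using True by simp
    have "lcp_len (take k u) v = l" using lcp_len_take_left[of k u v] by (simp add: k_def l_def)
    then have "tdist (take k u) v = k + (l + b) - 2 * l" unfolding tdist_def len vb by simp
    then have 2: "tdist (take k u) v = tdist u v - t" unfolding dd k_def using True by simp
    show ?thesis using take_in_TV[OF assms(1), of k] 1 2 by blast
  next
    case False
    define k where "k = l + (t - a)"
    have tb: "t - a \<le> b" using assms(3) unfolding dd by simp
    have len: "length (take k v) = k" using tb vb by (simp add: k_def)
    have "lcp_len u (take k v) = l" using lcp_len_take_right[of u k v] by (simp add: k_def l_def)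
    then have "tdist u (take k v) = (l + a) + k - 2 * l" unfolding tdist_def len ua by simp
    then have 1: "tdist u (take k v) = t" unfolding k_def using False by simp
    have "lcp_len (take k v) v = k" using lcp_len_take_left[of k v v] vb tb by (simp add: k_def)
    then have "tdist (take k v) v = l + b - k" unfolding tdist_def len vb by simp
    then have 2: "tdist (take k v) v = tdist u v - t" unfolding dd k_def using False tb by simp
    show ?thesis using take_in_TV[OF assms(2), of k] 1 2 by blast
  qed
qed

lemma geodesic_point_unique:
  assumes "tdist u w = t" "tdist w v = tdist u v - t" "tdist u w' = t" "tdist w' v = tdist u v - t"
    and "t \<le> tdist u v"
  shows "w = w'"
proof -
  have "tdist u v + tdist w w' \<le> max (tdist u w + tdist v w') (tdist u w' + tdist v w)"
    by (rule tdist_four_point)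
  then have "tdist w w' = 0" using assms by (simp add: tdist_comm)
  then show ?thesis by (simp add: tdist_eq_0_iff)
qed

lemma tdist_snoc: "tdist v (v @ [a]) = 1"
proof -
  have "lcp_len v (v @ [a]) = length v" using lcp_len_ge_iff[of "length v" v "v@[a]"] lcp_len_le_length1[of v "v@[a]"]
    by simp
  then show ?thesis unfolding tdist_def by simp
qed

lemma tadj_iff_tdist: "tadj d v w \<longleftrightarrow> v \<in> TV d \<and> w \<in> TV d \<and> tdist v w = 1"
proof
  assume "tadj d v w" then show "v \<in> TV d \<and> w \<in> TV d \<and> tdist v w = 1"
    unfolding tadj_def using tdist_snoc tdist_comm by metis
next
  assume a: "v \<in> TV d \<and> w \<in> TV d \<and> tdist v w = 1"
  define l where "l = lcp_len v w"
  have l1: "l \<le> length v" "l \<le> length w" unfolding l_def by (rule lcp_len_le_length1, rule lcp_len_le_length2)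
  have e: "length v + length w - 2 * l = 1" using a unfolding tdist_def l_def by simp
  have tk: "take l v = take l w" using lcp_len_ge_iff[of l v w] unfolding l_def by simp
  show "tadj d v w"
  proof (cases "length v = l")
    case True
    then have "length w = Suc l" using e l1 by linarith
    then have "w = take l w @ [w ! l]" by (metis lessI take_Suc_conv_app_nth take_all order_refl)
    then have "w = v @ [w ! l]" using tk True by simp
    then show ?thesis unfolding tadj_def using a by blast
  next
    case False
    then have "length v = Suc l" "length w = l" using e l1 by linarith+
    then have "v = take l v @ [v ! l]" by (metis lessI take_Suc_conv_app_nth take_all order_refl)
    then have "v = w @ [v ! l]" using tk \<open>length w = l\<close> by simp
    then show ?thesis unfolding tadj_def using a by blast
  qed
qed

lemma AutT_D:
  assumes "g \<in> AutT d"
  shows "\<And>x. x \<in> TV d \<Longrightarrow> g x \<in> TV d" "inj_on g (TV d)" "g ` TV d = TV d"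
    "\<And>v w. v \<in> TV d \<Longrightarrow> w \<in> TV d \<Longrightarrow> tadj d v w \<longleftrightarrow> tadj d (g v) (g w)"
  using assms unfolding AutT_def Bij_def bij_betw_def by auto

lemma tdist_le_if_preserves_tadj:
  assumes into: "\<And>x. x \<in> TV d \<Longrightarrow> f x \<in> TV d"
    and adj: "\<And>v w. tadj d v w \<Longrightarrow> tadj d (f v) (f w)"
    and "u \<in> TV d" "v \<in> TV d"
  shows "tdist (f u) (f v) \<le> tdist u v"
proof -
  have "\<forall>u\<in>TV d. \<forall>v\<in>TV d. tdist u v = n \<longrightarrow> tdist (f u) (f v) \<le> n" for n
  proof (induction n)
    case 0 then show ?case by (simp add: tdist_eq_0_iff)
  next
    case (Suc n)
    show ?case
    proof (intro ballI impI)
      fix u v assume uv: "u \<in> TV d" "v \<in> TV d" "tdist u v = Suc n"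
      obtain w where w: "w \<in> TV d" "tdist u w = 1" "tdist w v = n"
        using tdist_geodesic_point[OF uv(1,2), of 1] uv(3) by auto
      have "tdist (f u) (f w) = 1" using adj w uv tadj_iff_tdist by blast
      moreover have "tdist (f w) (f v) \<le> n" using Suc w uv by blast
      ultimately show "tdist (f u) (f v) \<le> Suc n"
        using tdist_triangle[of "f u" "f v" "f w"] by linarith
    qed
  qed
  then show ?thesis using assms by blast
qed

lemma AutT_tdist:
  assumes g: "g \<in> AutT d" and u: "u \<in> TV d" and v: "v \<in> TV d"
  shows "tdist (g u) (g v) = tdist u v"
proof (rule antisym)
  have adj: "tadj d v w \<Longrightarrow> tadj d (g v) (g w)" for v w
    using AutT_D(4)[OF g] unfolding tadj_def by blast
  show "tdist (g u) (g v) \<le> tdist u v"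
    using tdist_le_if_preserves_tadj[OF AutT_D(1)[OF g] adj u v] .
  define h where "h = inv_into (TV d) g"
  have hg: "h (g x) = x" if "x \<in> TV d" for x
    unfolding h_def using inv_into_f_f[OF AutT_D(2)[OF g] that] .
  have h_into: "h x \<in> TV d" if "x \<in> TV d" for x
    unfolding h_def using inv_into_into[of x g "TV d"] AutT_D(3)[OF g] that by simp
  have gh: "g (h x) = x" if "x \<in> TV d" for x
    unfolding h_def using f_inv_into_f[of x g "TV d"] AutT_D(3)[OF g] that by simp
  have h_adj: "tadj d (h v) (h w)" if "tadj d v w" for v w
  proof -
    have "v \<in> TV d" "w \<in> TV d" using that unfolding tadj_def by auto
    then show ?thesis using that AutT_D(4)[OF g, of "h v" "h w"] h_into gh by auto
  qed
  show "tdist u v \<le> tdist (g u) (g v)"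
    using tdist_le_if_preserves_tadj[where f = h, OF h_into h_adj AutT_D(1)[OF g u] AutT_D(1)[OF g v]]
    by (simp add: hg u v)
qed

section \<open>Isometries and axes\<close>

definition tree_isom :: "nat \<Rightarrow> (nat list \<Rightarrow> nat list) \<Rightarrow> bool" where
  "tree_isom d g \<longleftrightarrow> (\<forall>x\<in>TV d. g x \<in> TV d) \<and> (\<forall>x\<in>TV d. \<forall>y\<in>TV d. tdist (g x) (g y) = tdist x y)"

lemma tree_isomD: "tree_isom d g \<Longrightarrow> x \<in> TV d \<Longrightarrow> g x \<in> TV d"
  "tree_isom d g \<Longrightarrow> x \<in> TV d \<Longrightarrow> y \<in> TV d \<Longrightarrow> tdist (g x) (g y) = tdist x y"
  unfolding tree_isom_def by auto

lemma AutT_tree_isom: "g \<in> AutT d \<Longrightarrow> tree_isom d g"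
  unfolding tree_isom_def using AutT_D(1) AutT_tdist by blast

lemma tree_isom_comp: "tree_isom d g \<Longrightarrow> tree_isom d h \<Longrightarrow> tree_isom d (g \<circ> h)"
  unfolding tree_isom_def by auto

lemma tree_isom_id: "tree_isom d id" unfolding tree_isom_def by auto

lemma tree_isom_funpow: "tree_isom d g \<Longrightarrow> tree_isom d (g ^^ n)"
  by (induction n) (auto simp: tree_isom_id tree_isom_comp)

lemma tree_isom_inj: "tree_isom d g \<Longrightarrow> x \<in> TV d \<Longrightarrow> y \<in> TV d \<Longrightarrow> g x = g y \<Longrightarrow> x = y"
  using tree_isomD(2)[of d g x y] by (auto simp: tdist_eq_0_iff)

lemma tree_isom_funpow_in_TV: "tree_isom d g \<Longrightarrow> x \<in> TV d \<Longrightarrow> (g ^^ n) x \<in> TV d"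
  using tree_isom_funpow tree_isomD(1) by blast

text \<open>The geodesic from y to g y continues to g (g y): then y lies on an axis of g,
  which g translates by tdist y (g y).\<close>

definition on_axis :: "nat \<Rightarrow> (nat list \<Rightarrow> nat list) \<Rightarrow> nat list \<Rightarrow> bool" where
  "on_axis d g y \<longleftrightarrow> y \<in> TV d \<and> 0 < tdist y (g y) \<and> tdist y (g (g y)) = 2 * tdist y (g y)"

lemma midpoint_on_axis:
  assumes g: "tree_isom d g" and x: "x \<in> TV d" and m: "m \<in> TV d"
    and 1: "tdist x m = k" and 2: "tdist m (g x) = k" and 3: "tdist x (g x) = 2 * k"
    and moves: "0 < tdist m (g m)"
  shows "tdist m (g (g m)) = 2 * tdist m (g m)"
proof -
  define a where "a = tdist m (g m)"
  have gx: "g x \<in> TV d" and gm: "g m \<in> TV d" and ggx: "g (g x) \<in> TV d" and ggm: "g (g m) \<in> TV d"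
    using tree_isomD(1)[OF g] x m by blast+
  have i1: "tdist (g x) (g m) = k" using tree_isomD(2)[OF g x m] 1 by simp
  have i2: "tdist (g m) (g (g x)) = k" using tree_isomD(2)[OF g m gx] 2 by simp
  have i3: "tdist (g x) (g (g x)) = 2 * k" using tree_isomD(2)[OF g x gx] 3 by simp
  have i4: "tdist (g m) (g (g m)) = a" using tree_isomD(2)[OF g m gm] a_def by simp
  have i5: "tdist (g (g m)) (g (g x)) = k" using tree_isomD(2)[OF g gm gx] i1 by (simp add: tdist_comm)
  have s1: "tdist m (g (g x)) + tdist (g m) (g x) \<le> tdist m (g m) + tdist (g (g x)) (g x)
          \<or> tdist m (g (g x)) + tdist (g m) (g x) \<le> tdist m (g x) + tdist (g (g x)) (g m)"
    using tdist_four_point[of m "g (g x)" "g m" "g x"] by linarith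
  have e1: "tdist m (g (g x)) \<le> a + k"
    using s1 i1 i2 i3 2 moves a_def by (auto simp: tdist_comm)
  have "tdist m (g m) + tdist (g x) (g (g x)) \<le> tdist m (g (g x)) + tdist (g m) (g x)"
    by (rule tdist_four_point_le_xw) (use i1 i2 i3 2 moves a_def in \<open>auto simp: tdist_comm\<close>)
  then have e2: "tdist m (g (g x)) = a + k" using e1 i1 i3 a_def by (simp add: tdist_comm)
  have "tdist (g m) m + tdist (g x) x \<le> tdist (g m) x + tdist m (g x)"
    by (rule tdist_four_point_le_xw) (use i1 1 3 moves a_def in \<open>auto simp: tdist_comm\<close>)
  moreover have "tdist (g m) x + tdist m (g x) \<le> tdist (g m) m + tdist x (g x)
      \<or> tdist (g m) x + tdist m (g x) \<le> tdist (g m) (g x) + tdist x m"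
    using tdist_four_point[of "g m" x m "g x"] by linarith
  ultimately have e3: "tdist (g m) x = a + k" using i1 1 2 3 moves a_def by (auto simp: tdist_comm)
  have e4: "tdist (g (g m)) (g x) = a + k" using tree_isomD(2)[OF g gm x] e3 by simp
  have "tdist m (g (g x)) + tdist (g (g m)) (g x) \<le> tdist m (g (g m)) + tdist (g (g x)) (g x)"
    by (rule tdist_four_point_le_xz) (use e2 e4 2 i4 i2 i5 moves a_def in \<open>auto simp: tdist_comm\<close>)
  moreover have "tdist m (g (g m)) + tdist (g x) (g (g x)) \<le> tdist m (g x) + tdist (g (g m)) (g (g x))
      \<or> tdist m (g (g m)) + tdist (g x) (g (g x)) \<le> tdist m (g (g x)) + tdist (g (g m)) (g x)"
    using tdist_four_point[of m "g (g m)" "g x" "g (g x)"] by linarith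
  ultimately show ?thesis using e2 e4 2 i2 i3 i5 moves a_def by (auto simp: tdist_comm)
qed

lemma tdist_funpow_step:
  assumes g: "tree_isom d g" and y: "y \<in> TV d"
  shows "tdist ((g ^^ j) y) ((g ^^ Suc j) y) = tdist y (g y)"
proof -
  have "(g ^^ Suc j) y = (g ^^ j) (g y)" by (simp add: funpow_swap1)
  then show ?thesis using tree_isomD(2)[OF tree_isom_funpow[OF g, of j] y tree_isomD(1)[OF g y]] by simp
qed

lemma on_axis_tdist_funpow:
  assumes g: "tree_isom d g" and ax: "on_axis d g y"
  shows "tdist y ((g ^^ n) y) = n * tdist y (g y)"
proof -
  define l where "l = tdist y (g y)"
  have y: "y \<in> TV d" and l0: "0 < l" and l2: "tdist y (g (g y)) = 2 * l" using ax unfolding on_axis_def l_def by auto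
  let ?z = "\<lambda>j. (g ^^ j) y"
  have zW: "?z j \<in> TV d" for j using tree_isom_funpow_in_TV[OF g y] .
  have gy: "g y \<in> TV d" using tree_isomD(1)[OF g y] .
  have shift: "tdist (g y) (?z (Suc j)) = tdist y (?z j)" for j
    using tree_isomD(2)[OF g y zW[of j]] by simp
  have step: "tdist (?z j) (?z (Suc j)) = l" for j using tdist_funpow_step[OF g y] l_def by simp
  have "tdist y (?z n) = n * l \<and> tdist y (?z (Suc n)) = Suc n * l" for n
  proof (induction n)
    case 0 then show ?case using l_def by simp
  next
    case (Suc n)
    have A: "tdist y (?z (Suc n)) = Suc n * l" using Suc by blast
    have B: "tdist y (?z n) = n * l" using Suc by blast
    have C: "tdist y (?z (Suc (Suc n))) = Suc (Suc n) * l"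
    proof (cases n)
      case 0 then show ?thesis using l2 by (simp add: numeral_2_eq_2)
    next
      case (Suc n')
      have s1: "tdist (g y) (?z (Suc n)) = n * l" using shift[of n] B by simp
      have s2: "tdist (g y) (?z (Suc (Suc n))) = Suc n * l" using shift[of "Suc n"] A by simp
      have s3: "tdist (?z (Suc n)) (?z (Suc (Suc n))) = l" using step by blast
      have up: "tdist y (?z (Suc (Suc n))) + tdist (g y) (?z (Suc n)) \<le> tdist y (g y) + tdist (?z (Suc (Suc n))) (?z (Suc n))
         \<or> tdist y (?z (Suc (Suc n))) + tdist (g y) (?z (Suc n)) \<le> tdist y (?z (Suc n)) + tdist (?z (Suc (Suc n))) (g y)"
        using tdist_four_point[of y "?z (Suc (Suc n))" "g y" "?z (Suc n)"] by linarith
      have "tdist y (g y) + tdist (?z (Suc n)) (?z (Suc (Suc n))) < tdist y (?z (Suc n)) + tdist (g y) (?z (Suc (Suc n)))"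
        using A s2 s3 l_def l0 Suc by simp
      then have lo: "tdist y (?z (Suc n)) + tdist (g y) (?z (Suc (Suc n))) \<le> tdist y (?z (Suc (Suc n))) + tdist (?z (Suc n)) (g y)"
        by (rule tdist_four_point_le_xw)
      show ?thesis using up lo A s1 s2 s3 l_def l0 Suc by (auto simp: tdist_comm algebra_simps)
    qed
    show ?case using A C by simp
  qed
  then show ?thesis using l_def by blast
qed

lemma on_axis_no_periodic_point:
  assumes g: "tree_isom d g" and ax: "on_axis d g y" and w: "w \<in> TV d" and j: "0 < j" and p: "(g ^^ j) w = w"
  shows False
proof -
  have y: "y \<in> TV d" and l0: "0 < tdist y (g y)" using ax unfolding on_axis_def by auto
  define m where "m = Suc (2 * tdist y w)"
  have pw: "(g ^^ (j * m)) w = w"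
  proof -
    have "((g ^^ j) ^^ k) w = w" for k by (induction k) (auto simp: p)
    then show ?thesis by (simp add: funpow_mult)
  qed
  have "tdist y ((g ^^ (j * m)) y) \<le> tdist y w + tdist w ((g ^^ (j * m)) y)" by (rule tdist_triangle)
  also have "tdist w ((g ^^ (j * m)) y) = tdist y w"
    using tree_isomD(2)[OF tree_isom_funpow[OF g, of "j*m"] w y] pw by (simp add: tdist_comm)
  finally have "(j * m) * tdist y (g y) \<le> 2 * tdist y w" using on_axis_tdist_funpow[OF g ax, of "j*m"] by simp
  moreover have "m \<le> (j * m) * tdist y (g y)" using j l0 by simp
  ultimately show False unfolding m_def by simp
qed

section \<open>Subtrees and Helly's theorem\<close>

definition tree_convex :: "nat \<Rightarrow> nat list set \<Rightarrow> bool" where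
  "tree_convex d Q \<longleftrightarrow> Q \<subseteq> TV d \<and> (\<forall>u\<in>Q. \<forall>v\<in>Q. \<forall>w\<in>TV d. tdist u w + tdist w v = tdist u v \<longrightarrow> w \<in> Q)"

definition fixset :: "nat \<Rightarrow> (nat list \<Rightarrow> nat list) \<Rightarrow> nat list set" where
  "fixset d g = {x \<in> TV d. g x = x}"

lemma tree_isom_fixes_geodesic:
  assumes g: "tree_isom d g" and u: "u \<in> TV d" "g u = u" and v: "v \<in> TV d" "g v = v"
    and w: "w \<in> TV d" "tdist u w + tdist w v = tdist u v"
  shows "g w = w"
proof -
  have "tdist u (g w) = tdist u w" using tree_isomD(2)[OF g u(1) w(1)] u by simp
  moreover have "tdist (g w) v = tdist w v" using tree_isomD(2)[OF g w(1) v(1)] v by simp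
  ultimately show ?thesis using geodesic_point_unique[of u "g w" "tdist u w" v w] w by simp
qed

lemma fixset_tree_convex: "tree_isom d g \<Longrightarrow> tree_convex d (fixset d g)"
  unfolding tree_convex_def fixset_def using tree_isom_fixes_geodesic by blast

lemma tree_convex_Int: "tree_convex d Q \<Longrightarrow> tree_convex d Y \<Longrightarrow> tree_convex d (Q \<inter> Y)"
  unfolding tree_convex_def by blast

lemma tdist_1_parity: "tdist q p1 = 1 \<Longrightarrow> odd (length q + length p1)"
  using tdist_parity[of q p1] by simp

lemma tdist_turn:
  assumes "tdist q p1 = 1" "tdist q r1 = 1" "p1 \<noteq> r1"
    and "tdist p1 p + 1 = tdist q p" "tdist r1 r + 1 = tdist q r"
  shows "tdist p r = tdist p q + tdist q r"
proof -
  have "even (tdist p1 r1)" using tdist_parity[of p1 r1] tdist_1_parity[OF assms(1)] tdist_1_parity[OF assms(2)]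
    by presburger
  moreover have "tdist p1 r1 \<le> 2" using tdist_triangle[of p1 r1 q] assms(1,2) by (simp add: tdist_comm)
  moreover have "tdist p1 r1 \<noteq> 0" using assms(3) by (simp add: tdist_eq_0_iff)
  ultimately have pr: "tdist p1 r1 = 2" by presburger
  have le: "tdist p r \<le> tdist p q + tdist q r" by (rule tdist_triangle)
  show ?thesis
  proof (rule ccontr)
    assume "tdist p r \<noteq> tdist p q + tdist q r"
    then have lt: "tdist p r < tdist p q + tdist q r" using le by simp
    have f1: "tdist p1 r + tdist p q \<le> tdist p1 p + tdist r q \<or> tdist p1 r + tdist p q \<le> tdist p1 q + tdist r p"
      using tdist_four_point_disj[of p1 r p q] .
    have f2: "tdist p1 r1 + tdist r q \<le> tdist p1 r + tdist r1 q \<or> tdist p1 r1 + tdist r q \<le> tdist p1 q + tdist r1 r"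
      using tdist_four_point_disj[of p1 r1 r q] .
    have c: "tdist p1 q = 1" "tdist r1 q = 1" "tdist r q = tdist q r" "tdist p q = tdist q p" "tdist r r1 = tdist r1 r" "tdist r p = tdist p r"
      using assms(1,2) by (simp_all add: tdist_comm)
    have t: "tdist p1 r \<le> tdist p1 q + tdist q r" by (rule tdist_triangle)
    from f1 show False
    proof
      assume h1: "tdist p1 r + tdist p q \<le> tdist p1 p + tdist r q"
      from f2 show False
      proof
        assume "tdist p1 r1 + tdist r q \<le> tdist p1 r + tdist r1 q"
        then show False using h1 c lt pr assms(4,5) by linarith
      next
        assume "tdist p1 r1 + tdist r q \<le> tdist p1 q + tdist r1 r"
        then show False using c pr assms(4,5) by linarith
      qed
    next
      assume h1: "tdist p1 r + tdist p q \<le> tdist p1 q + tdist r p"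
      from f2 show False
      proof
        assume "tdist p1 r1 + tdist r q \<le> tdist p1 r + tdist r1 q"
        then show False using h1 c lt pr assms(4,5) t by linarith
      next
        assume "tdist p1 r1 + tdist r q \<le> tdist p1 q + tdist r1 r"
        then show False using c pr assms(4,5) by linarith
      qed
    qed
  qed
qed

lemma tdist_median:
  assumes a: "a \<in> TV d" and b: "b \<in> TV d" and c: "c \<in> TV d"
  shows "\<exists>m\<in>TV d. tdist a m + tdist m b = tdist a b \<and> tdist b m + tdist m c = tdist b c \<and> tdist a m + tdist m c = tdist a c"
proof -
  have ev: "even (tdist a b + tdist a c + tdist b c)"
    using tdist_parity[of a b] tdist_parity[of a c] tdist_parity[of b c] by presburger
  define k where "k = (tdist a b + tdist a c - tdist b c) div 2"
  have t1: "tdist a c \<le> tdist a b + tdist b c" by (rule tdist_triangle)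
  have t2: "tdist b c \<le> tdist a b + tdist a c" using tdist_triangle[of b c a] by (simp add: tdist_comm)
  have t3: "tdist a b \<le> tdist a c + tdist b c" using tdist_triangle[of a b c] by (simp add: tdist_comm)
  have k2: "2 * k = tdist a b + tdist a c - tdist b c" unfolding k_def using ev t2 by presburger
  have kab: "k \<le> tdist a b" using k2 t1 by linarith
  obtain m where m: "m \<in> TV d" "tdist a m = k" "tdist m b = tdist a b - k" using tdist_geodesic_point[OF a b kab] by auto
  have bm: "tdist b m = tdist a b - k" using m(3) by (simp add: tdist_comm)
  have kac: "k \<le> tdist a c" using k2 t3 by linarith
  have "tdist a b + tdist m c \<le> tdist a m + tdist b c \<or> tdist a b + tdist m c \<le> tdist a c + tdist b m"
    using tdist_four_point_disj[of a b m c] .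
  then have "tdist m c \<le> tdist a c - k"
  proof
    assume "tdist a b + tdist m c \<le> tdist a m + tdist b c"
    then show ?thesis using m(2) k2 kab kac t2 by linarith
  next
    assume "tdist a b + tdist m c \<le> tdist a c + tdist b m"
    then show ?thesis using bm k2 kab kac by linarith
  qed
  moreover have "tdist a c \<le> tdist a m + tdist m c" by (rule tdist_triangle)
  ultimately have mc: "tdist m c = tdist a c - k" using m(2) by linarith
  have e1: "tdist a m + tdist m b = tdist a b" using m kab by linarith
  have e2: "tdist b m + tdist m c = tdist b c" using bm mc k2 kab kac t2 by linarith
  have e3: "tdist a m + tdist m c = tdist a c" using m(2) mc kac by linarith
  show ?thesis using m(1) e1 e2 e3 by blast
qed

lemma tree_convexD: "tree_convex d Q \<Longrightarrow> u \<in> Q \<Longrightarrow> v \<in> Q \<Longrightarrow> w \<in> TV d \<Longrightarrow> tdist u w + tdist w v = tdist u v \<Longrightarrow> w \<in> Q"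
  unfolding tree_convex_def by blast

lemma tree_convex_subset: "tree_convex d Q \<Longrightarrow> Q \<subseteq> TV d" unfolding tree_convex_def by blast

lemma tree_convex_helly3:
  assumes "tree_convex d Q" "tree_convex d Y" "tree_convex d Z" "Q \<inter> Y \<noteq> {}" "Y \<inter> Z \<noteq> {}" "Q \<inter> Z \<noteq> {}"
  shows "Q \<inter> Y \<inter> Z \<noteq> {}"
proof -
  obtain a b c where abc: "a \<in> Q \<inter> Y" "b \<in> Y \<inter> Z" "c \<in> Q \<inter> Z" using assms(4-6) by blast
  have W: "a \<in> TV d" "b \<in> TV d" "c \<in> TV d" using abc tree_convex_subset[OF assms(1)] tree_convex_subset[OF assms(2)] by blast+
  obtain m where m: "m \<in> TV d" "tdist a m + tdist m b = tdist a b" "tdist b m + tdist m c = tdist b c"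
    "tdist a m + tdist m c = tdist a c" using tdist_median[OF W] by blast
  have "m \<in> Y" using tree_convexD[OF assms(2), of a b m] abc m by blast
  moreover have "m \<in> Z" using tree_convexD[OF assms(3), of b c m] abc m by blast
  moreover have "m \<in> Q" using tree_convexD[OF assms(1), of a c m] abc m by blast
  ultimately show ?thesis by blast
qed

lemma tree_convex_helly:
  assumes "finite I" "I \<noteq> {}" "\<forall>i\<in>I. tree_convex d (Q i)" "\<forall>i\<in>I. \<forall>j\<in>I. Q i \<inter> Q j \<noteq> {}"
  shows "(\<Inter>i\<in>I. Q i) \<noteq> {}"
  using assms
proof (induction "card I" arbitrary: I Q rule: less_induct)
  case less
  show ?case
  proof (cases "\<exists>i. I = {i}")
    case True
    then obtain i where "I = {i}" by blast
    then show ?thesis using less.prems(4) by auto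
  next
    case False
    obtain i where i: "i \<in> I" using less.prems(2) by blast
    obtain j where j: "j \<in> I" "j \<noteq> i" using False i by blast
    define I' where "I' = I - {i}"
    define Q' where "Q' = Q(j := Q i \<inter> Q j)"
    have "card I' < card I" unfolding I'_def using i less.prems(1) by (rule card_Diff1_less[rotated])
    moreover have "finite I'" "I' \<noteq> {}" unfolding I'_def using less.prems(1) j by auto
    moreover have "\<forall>k\<in>I'. tree_convex d (Q' k)" unfolding Q'_def I'_def using less.prems(3) i j tree_convex_Int by auto
    moreover have "\<forall>k\<in>I'. \<forall>l\<in>I'. Q' k \<inter> Q' l \<noteq> {}"
    proof (intro ballI)
      fix k l assume kl: "k \<in> I'" "l \<in> I'"
      have h3: "Q i \<inter> Q j \<inter> Q m \<noteq> {}" if "m \<in> I" for m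
        using tree_convex_helly3[of d "Q i" "Q j" "Q m"] less.prems(3,4) i j that by auto
      have kI: "k \<in> I" "l \<in> I" using kl unfolding I'_def by auto
      consider "k = j" "l = j" | "k = j" "l \<noteq> j" | "k \<noteq> j" "l = j" | "k \<noteq> j" "l \<noteq> j" by blast
      then show "Q' k \<inter> Q' l \<noteq> {}"
      proof cases
        case 1 then show ?thesis using less.prems(4) i j unfolding Q'_def by simp
      next
        case 2 then show ?thesis using h3[OF kI(2)] unfolding Q'_def by simp
      next
        case 3 then show ?thesis using h3[OF kI(1)] unfolding Q'_def by (simp add: Int_ac)
      next
        case 4 then show ?thesis using less.prems(4) kI unfolding Q'_def by simp
      qed
    qed
    ultimately have "(\<Inter>k\<in>I'. Q' k) \<noteq> {}" using less.hyps by blast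
    moreover have "(\<Inter>k\<in>I'. Q' k) = (\<Inter>k\<in>I. Q k)" unfolding Q'_def I'_def using i j by auto
    ultimately show ?thesis by simp
  qed
qed

text \<open>Serre's lemma. Take a shortest path p, q between the two fixed subtrees; then q is the
  midpoint of p and s p, and the midpoint criterion applies to s \<circ> t at q.\<close>

lemma hyperbolic_product_of_elliptics:
  assumes s: "tree_isom d s" and t: "tree_isom d t" and ns: "fixset d s \<noteq> {}" and nt: "fixset d t \<noteq> {}"
    and disj: "fixset d s \<inter> fixset d t = {}"
  shows "\<exists>y. on_axis d (s \<circ> t) y"
proof -
  define P where "P = (\<lambda>n. \<exists>p\<in>fixset d t. \<exists>q\<in>fixset d s. tdist p q = n)"
  have ex: "\<exists>n. P n" using ns nt unfolding P_def by blast
  define D where "D = (LEAST n. P n)"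
  have PD: "P D" unfolding D_def using ex by (rule LeastI_ex)
  have Dmin: "\<And>p q. p \<in> fixset d t \<Longrightarrow> q \<in> fixset d s \<Longrightarrow> D \<le> tdist p q"
    unfolding D_def P_def by (rule Least_le) blast
  obtain p q where p: "p \<in> fixset d t" and q: "q \<in> fixset d s" and pq: "tdist p q = D"
    using PD unfolding P_def by blast
  have pW: "p \<in> TV d" "t p = p" using p unfolding fixset_def by auto
  have qW: "q \<in> TV d" "s q = q" using q unfolding fixset_def by auto
  have D0: "0 < D" using pq disj p q by (auto simp: tdist_eq_0_iff)
  have qp: "tdist q p = D" using pq by (simp add: tdist_comm)
  obtain p1 where p1: "p1 \<in> TV d" "tdist q p1 = 1" "tdist p1 p = D - 1"
    using tdist_geodesic_point[OF qW(1) pW(1), of 1] qp D0 by auto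
  have sp1: "s p1 \<noteq> p1"
  proof
    assume "s p1 = p1"
    then have "p1 \<in> fixset d s" using p1 unfolding fixset_def by simp
    then have "D \<le> tdist p p1" using Dmin[OF p] by blast
    then show False using p1(3) D0 by (simp add: tdist_comm)
  qed
  have sW: "s p \<in> TV d" "s p1 \<in> TV d" using tree_isomD(1)[OF s] pW p1 by auto
  have a1: "tdist q (s p1) = 1" using tree_isomD(2)[OF s qW(1) p1(1)] qW p1 by simp
  have a2: "tdist (s p1) (s p) = D - 1" using tree_isomD(2)[OF s p1(1) pW(1)] p1 by simp
  have a3: "tdist q (s p) = D" using tree_isomD(2)[OF s qW(1) pW(1)] qW qp by simp
  have "tdist p (s p) = tdist p q + tdist q (s p)"
    by (rule tdist_turn[of q p1 "s p1"]) (use p1 a1 a2 a3 sp1 qp D0 in auto)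
  then have pp: "tdist p (s p) = 2 * D" using pq a3 by simp
  let ?g = "s \<circ> t"
  have g: "tree_isom d ?g" using tree_isom_comp[OF s t] .
  have gp: "?g p = s p" using pW by simp
  have gq: "?g q \<noteq> q"
  proof
    assume "?g q = q"
    then have "s (t q) = s q" using qW by simp
    then have "t q = q" using tree_isom_inj[OF s tree_isomD(1)[OF t qW(1)] qW(1)] by simp
    then show False using disj p q qW unfolding fixset_def by blast
  qed
  have pos: "0 < tdist q (?g q)" using gq tdist_eq_0_iff[of q "?g q"] by (metis gr0I)
  have "tdist q (?g (?g q)) = 2 * tdist q (?g q)"
    by (rule midpoint_on_axis[OF g pW(1) qW(1), of D]) (use pq a3 pp gp pos in simp_all)
  then show ?thesis using qW pos unfolding on_axis_def by blast
qed

section \<open>Coordinates on an axis\<close>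

lemma tdist_between:
  assumes "tdist u p + tdist p v = tdist u v" "tdist u z + tdist z v = tdist u v" "tdist u p \<le> tdist u z"
  shows "tdist p z = tdist u z - tdist u p"
proof -
  have "tdist u v + tdist p z \<le> tdist u p + tdist v z \<or> tdist u v + tdist p z \<le> tdist u z + tdist v p"
    using tdist_four_point_disj[of u v p z] .
  moreover have "tdist u z \<le> tdist u p + tdist p z" by (rule tdist_triangle)
  ultimately show ?thesis using assms by (auto simp: tdist_comm)
qed

lemma funpow_commute_on:
  assumes "\<And>x. x \<in> S \<Longrightarrow> f x \<in> S" "\<And>x. x \<in> S \<Longrightarrow> g x \<in> S"
    "\<And>x. x \<in> S \<Longrightarrow> f (g x) = g (f x)"
  shows "x \<in> S \<Longrightarrow> (f ^^ n) (g x) = g ((f ^^ n) x)"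
proof (induction n arbitrary: x)
  case (Suc n)
  have "(f ^^ n) x \<in> S" using Suc.prems assms(1) by (induction n) auto
  then show ?case using Suc assms by simp
qed simp

locale hyperbolic_axis =
  fixes d :: nat and a ai :: "nat list \<Rightarrow> nat list" and y :: "nat list"
  assumes a: "tree_isom d a" and ai: "tree_isom d ai"
    and inv1: "\<And>x. x \<in> TV d \<Longrightarrow> a (ai x) = x" and inv2: "\<And>x. x \<in> TV d \<Longrightarrow> ai (a x) = x"
    and ax: "on_axis d a y"
begin

definition tlen where "tlen = tdist y (a y)"
definition axis_pt where "axis_pt z \<longleftrightarrow> z \<in> TV d \<and> tdist z (a z) = tlen \<and> tdist z (a (a z)) = 2 * tlen"

lemma y_in_TV: "y \<in> TV d" and tlen_pos: "0 < tlen" and axis_pt_y: "axis_pt y"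
  using ax unfolding on_axis_def tlen_def axis_pt_def by auto

lemma a_funpow_in_TV: "x \<in> TV d \<Longrightarrow> (a ^^ n) x \<in> TV d" using tree_isom_funpow_in_TV[OF a] by blast
lemma ai_funpow_in_TV: "x \<in> TV d \<Longrightarrow> (ai ^^ n) x \<in> TV d" using tree_isom_funpow_in_TV[OF ai] by blast

lemma a_ai_funpow: "x \<in> TV d \<Longrightarrow> (a ^^ n) ((ai ^^ n) x) = x"
proof (induction n arbitrary: x)
  case (Suc n)
  have "(a ^^ Suc n) ((ai ^^ Suc n) x) = (a ^^ n) (a (ai ((ai ^^ n) x)))"
    by (simp add: funpow_swap1)
  also have "\<dots> = x" using inv1[OF ai_funpow_in_TV[OF Suc.prems]] Suc by simp
  finally show ?case .
qed simp

lemma ai_a_funpow: "x \<in> TV d \<Longrightarrow> (ai ^^ n) ((a ^^ n) x) = x"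
proof (induction n arbitrary: x)
  case (Suc n)
  have "(ai ^^ Suc n) ((a ^^ Suc n) x) = (ai ^^ n) (ai (a ((a ^^ n) x)))"
    by (simp add: funpow_swap1)
  also have "\<dots> = x" using inv2[OF a_funpow_in_TV[OF Suc.prems]] Suc by simp
  finally show ?case .
qed simp

lemma a_ai_funpow_le: "x \<in> TV d \<Longrightarrow> m \<le> n \<Longrightarrow> (a ^^ m) ((ai ^^ n) x) = (ai ^^ (n - m)) x"
proof -
  assume x: "x \<in> TV d" and mn: "m \<le> n"
  have "(ai ^^ n) x = (ai ^^ m) ((ai ^^ (n - m)) x)" using mn
    by (metis funpow_add le_add_diff_inverse o_apply)
  then show ?thesis using a_ai_funpow[OF ai_funpow_in_TV[OF x]] by simp
qed

lemma ai_a_commute: "x \<in> TV d \<Longrightarrow> ai (a x) = a (ai x)"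
  using inv1 inv2 by simp

lemma tdist_y_a_funpow: "tdist y ((a ^^ n) y) = n * tlen"
  using on_axis_tdist_funpow[OF a ax] tlen_def by simp

lemma tdist_y_ai_funpow: "tdist y ((ai ^^ n) y) = n * tlen"
proof -
  have "tdist ((a ^^ n) y) ((a ^^ n) ((ai ^^ n) y)) = tdist y ((ai ^^ n) y)"
    using tree_isomD(2)[OF tree_isom_funpow[OF a] y_in_TV ai_funpow_in_TV[OF y_in_TV]] .
  then show ?thesis using a_ai_funpow[OF y_in_TV] tdist_y_a_funpow by (simp add: tdist_comm)
qed

lemma tdist_ai_funpow_a_funpow: "tdist ((ai ^^ n) y) ((a ^^ m) y) = (n + m) * tlen"
proof -
  have "tdist ((a ^^ n) ((ai ^^ n) y)) ((a ^^ n) ((a ^^ m) y)) = tdist ((ai ^^ n) y) ((a ^^ m) y)"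
    using tree_isomD(2)[OF tree_isom_funpow[OF a] ai_funpow_in_TV[OF y_in_TV] a_funpow_in_TV[OF y_in_TV]] .
  moreover have "(a ^^ n) ((a ^^ m) y) = (a ^^ (n + m)) y" by (simp add: funpow_add)
  ultimately show ?thesis using a_ai_funpow[OF y_in_TV] tdist_y_a_funpow by simp
qed

lemma tdist_ai_funpow_ai_funpow: "m \<le> n \<Longrightarrow> tdist ((ai ^^ m) y) ((ai ^^ n) y) = (n - m) * tlen"
proof -
  assume mn: "m \<le> n"
  have "tdist ((a ^^ m) ((ai ^^ m) y)) ((a ^^ m) ((ai ^^ n) y)) = tdist ((ai ^^ m) y) ((ai ^^ n) y)"
    using tree_isomD(2)[OF tree_isom_funpow[OF a] ai_funpow_in_TV[OF y_in_TV] ai_funpow_in_TV[OF y_in_TV]] .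
  then show ?thesis using a_ai_funpow[OF y_in_TV] a_ai_funpow_le[OF y_in_TV mn] tdist_y_ai_funpow by simp
qed

lemma axis_pt_on_axis: "axis_pt z \<Longrightarrow> on_axis d a z"
  unfolding axis_pt_def on_axis_def using tlen_pos by auto

lemma axis_pt_commuting_image:
  assumes L: "axis_pt z" and b: "tree_isom d b" and ba_commute: "\<And>x. x \<in> TV d \<Longrightarrow> b (a x) = a (b x)"
  shows "axis_pt (b z)"
proof -
  have z: "z \<in> TV d" using L unfolding axis_pt_def by auto
  have az: "a z \<in> TV d" "a (a z) \<in> TV d" using tree_isomD(1)[OF a] z by auto
  have "tdist (b z) (a (b z)) = tdist z (a z)" using tree_isomD(2)[OF b z az(1)] ba_commute[OF z] by simp
  moreover have "tdist (b z) (a (a (b z))) = tdist z (a (a z))"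
    using tree_isomD(2)[OF b z az(2)] ba_commute[OF z] ba_commute[OF az(1)] by simp
  ultimately show ?thesis using L tree_isomD(1)[OF b z] unfolding axis_pt_def by simp
qed

lemma tdist_axis_pt_ends:
  assumes L: "axis_pt z" and n: "tdist z y < n * tlen"
  shows "tdist z ((a ^^ n) y) + tdist z ((ai ^^ n) y) = 2 * n * tlen"
proof -
  have z: "z \<in> TV d" using L unfolding axis_pt_def by auto
  let ?an = "a ^^ n"
  have anz: "?an z \<in> TV d" using a_funpow_in_TV[OF z] .
  have d1: "tdist z (?an z) = n * tlen" using on_axis_tdist_funpow[OF a axis_pt_on_axis[OF L], of n] L unfolding axis_pt_def by simp
  have d2: "tdist y (?an y) = n * tlen" using tdist_y_a_funpow .
  have d3: "tdist (?an z) (?an y) = tdist z y" using tree_isomD(2)[OF tree_isom_funpow[OF a] z y_in_TV] .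
  have d4: "tdist (?an z) y = tdist z ((ai ^^ n) y)"
    using tree_isomD(2)[OF tree_isom_funpow[OF ai, of n] anz y_in_TV] ai_a_funpow[OF z, of n] by simp
  have "tdist z y + tdist (?an z) (?an y) < tdist z (?an z) + tdist y (?an y)" using d1 d2 d3 n by simp
  then have lo: "tdist z (?an z) + tdist y (?an y) \<le> tdist z (?an y) + tdist (?an z) y" by (rule tdist_four_point_le_xw)
  have "tdist z (?an y) + tdist (?an z) y \<le> tdist z (?an z) + tdist (?an y) y
      \<or> tdist z (?an y) + tdist (?an z) y \<le> tdist z y + tdist (?an y) (?an z)"
    using tdist_four_point_disj[of z "?an y" "?an z" y] .
  then have up: "tdist z (?an y) + tdist (?an z) y \<le> 2 * n * tlen"
    using d1 d2 d3 n by (auto simp: tdist_comm)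
  show ?thesis using lo up d1 d2 d4 by simp
qed

lemma tdist_axis_pt_ai_funpow_Suc:
  assumes L: "axis_pt z" and n: "tdist z y \<le> n"
  shows "tdist z ((ai ^^ Suc n) y) = tdist z ((ai ^^ n) y) + tlen"
proof -
  have z: "z \<in> TV d" using L unfolding axis_pt_def by auto
  define M where "M = Suc n"
  have Ml: "M * tlen = tlen + n * tlen" unfolding M_def by simp
  have nl: "n \<le> n * tlen" using tlen_pos by simp
  have "tdist z y < M * tlen" using n Ml nl tlen_pos by linarith
  then have AL: "tdist z ((a ^^ M) y) + tdist z ((ai ^^ M) y) = 2 * M * tlen" by (rule tdist_axis_pt_ends[OF L])
  let ?u = "(ai ^^ M) y" and ?v = "(a ^^ M) y" and ?p = "(ai ^^ n) y"
  have uv: "tdist ?u ?v = 2 * M * tlen" using tdist_ai_funpow_a_funpow[of M M] by simp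
  have up: "tdist ?u ?p = tlen" using tdist_ai_funpow_ai_funpow[of n M] unfolding M_def by (simp add: tdist_comm)
  have pv: "tdist ?p ?v = (n + M) * tlen" using tdist_ai_funpow_a_funpow .
  have upv: "tdist ?u ?p + tdist ?p ?v = tdist ?u ?v" using up pv uv unfolding M_def by simp
  have uzv: "tdist ?u z + tdist z ?v = tdist ?u ?v" using AL uv by (simp add: tdist_comm)
  have "tdist ?u y \<le> tdist ?u z + tdist z y" by (rule tdist_triangle)
  moreover have "tdist ?u y = M * tlen" using tdist_y_ai_funpow[of M] by (simp add: tdist_comm)
  ultimately have "tlen \<le> tdist ?u z" using n Ml nl by linarith
  then have "tdist ?p z = tdist ?u z - tlen" using tdist_between[OF upv uzv] up by simp
  then show ?thesis using \<open>tlen \<le> tdist ?u z\<close> by (simp add: tdist_comm M_def)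
qed

text \<open>The signed position of an axis point z relative to y, read off from the distance
  to a point far out on the negative ray (the value does not depend on how far, see
  of_nat_tdist_axis_pt_ai_funpow).\<close>

definition axis_coord where "axis_coord z = int (tdist z ((ai ^^ (tdist z y)) y)) - int (tdist z y * tlen)"

lemma of_nat_tdist_axis_pt_ai_funpow:
  assumes L: "axis_pt z" and n: "tdist z y \<le> n"
  shows "int (tdist z ((ai ^^ n) y)) = axis_coord z + int (n * tlen)"
  using n
proof (induction n rule: dec_induct)
  case base then show ?case unfolding axis_coord_def by simp
next
  case (step n)
  then show ?case using tdist_axis_pt_ai_funpow_Suc[OF L, of n] by (simp add: algebra_simps)
qed

lemma of_nat_tdist_axis_coord:
  assumes Lz: "axis_pt z" and Lw: "axis_pt w" and le: "axis_coord z \<le> axis_coord w"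
  shows "int (tdist z w) = axis_coord w - axis_coord z"
proof -
  define n where "n = Suc (tdist z y + tdist w y)"
  have "n \<le> n * tlen" using tlen_pos by simp
  then have nz: "tdist z y < n * tlen" "tdist w y < n * tlen" unfolding n_def by linarith+
  let ?u = "(ai ^^ n) y" and ?v = "(a ^^ n) y"
  have uv: "tdist ?u ?v = 2 * n * tlen" using tdist_ai_funpow_a_funpow[of n n] by simp
  have uz: "tdist ?u z + tdist z ?v = tdist ?u ?v" using tdist_axis_pt_ends[OF Lz nz(1)] uv by (simp add: tdist_comm)
  have uw: "tdist ?u w + tdist w ?v = tdist ?u ?v" using tdist_axis_pt_ends[OF Lw nz(2)] uv by (simp add: tdist_comm)
  have pz: "int (tdist ?u z) = axis_coord z + int (n * tlen)" using of_nat_tdist_axis_pt_ai_funpow[OF Lz, of n] unfolding n_def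
    by (simp add: tdist_comm)
  have pw: "int (tdist ?u w) = axis_coord w + int (n * tlen)" using of_nat_tdist_axis_pt_ai_funpow[OF Lw, of n] unfolding n_def
    by (simp add: tdist_comm)
  have "tdist ?u z \<le> tdist ?u w" using pz pw le by linarith
  then have "tdist z w = tdist ?u w - tdist ?u z" by (rule tdist_between[OF uz uw])
  then show ?thesis using pz pw \<open>tdist ?u z \<le> tdist ?u w\<close> by simp
qed

lemma axis_coord_inj: "axis_pt z \<Longrightarrow> axis_pt w \<Longrightarrow> axis_coord z = axis_coord w \<Longrightarrow> z = w"
  using of_nat_tdist_axis_coord[of z w] by (simp add: tdist_eq_0_iff)

lemma axis_pt_a_funpow: "axis_pt ((a ^^ k) y)"
  using axis_pt_commuting_image[OF axis_pt_y tree_isom_funpow[OF a, of k]] by (simp add: funpow_swap1)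

lemma axis_pt_ai: "axis_pt w \<Longrightarrow> axis_pt (ai w)"
  using axis_pt_commuting_image[OF _ ai] ai_a_commute by blast

lemma axis_pt_ai_funpow: "axis_pt w \<Longrightarrow> axis_pt ((ai ^^ k) w)"
  by (induction k) (auto intro: axis_pt_ai)

lemma axis_pt_ai_funpow_y: "axis_pt ((ai ^^ k) y)"
  using axis_pt_ai_funpow[OF axis_pt_y] .

lemma axis_coord_a_funpow: "axis_coord ((a ^^ k) y) = int (k * tlen)"
proof -
  define n where "n = tdist ((a ^^ k) y) y"
  have "int (tdist ((a ^^ k) y) ((ai ^^ n) y)) = axis_coord ((a ^^ k) y) + int (n * tlen)"
    using of_nat_tdist_axis_pt_ai_funpow[OF axis_pt_a_funpow[of k], of n] n_def by simp
  moreover have "tdist ((a ^^ k) y) ((ai ^^ n) y) = (n + k) * tlen" using tdist_ai_funpow_a_funpow[of n k] by (simp add: tdist_comm)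
  ultimately show ?thesis by (simp add: algebra_simps)
qed

lemma axis_coord_y: "axis_coord y = 0"
  using axis_coord_a_funpow[of 0] by simp

lemma axis_coord_ai_funpow_y: "axis_coord ((ai ^^ k) y) = - int (k * tlen)"
proof -
  define n where "n = tdist ((ai ^^ k) y) y"
  have n': "n = k * tlen" unfolding n_def using tdist_y_ai_funpow[of k] by (simp add: tdist_comm)
  have kn: "k \<le> n" unfolding n' using tlen_pos by simp
  have "int (tdist ((ai ^^ k) y) ((ai ^^ n) y)) = axis_coord ((ai ^^ k) y) + int (n * tlen)"
    using of_nat_tdist_axis_pt_ai_funpow[OF axis_pt_ai_funpow_y, of k n] n_def by simp
  moreover have "tdist ((ai ^^ k) y) ((ai ^^ n) y) = (n - k) * tlen" using tdist_ai_funpow_ai_funpow[OF kn] .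
  ultimately show ?thesis using kn by (simp add: algebra_simps of_nat_diff)
qed

lemma axis_coord_ai:
  assumes L: "axis_pt w"
  shows "axis_coord (ai w) = axis_coord w - int tlen"
proof -
  have w: "w \<in> TV d" using L unfolding axis_pt_def by auto
  define m where "m = tdist (ai w) y + tdist w y"
  define n where "n = Suc m"
  have s1: "int (tdist (ai w) ((ai ^^ n) y)) = axis_coord (ai w) + int (n * tlen)"
    using of_nat_tdist_axis_pt_ai_funpow[OF axis_pt_ai[OF L], of n] unfolding n_def m_def by simp
  have "tdist (a (ai w)) (a ((ai ^^ n) y)) = tdist (ai w) ((ai ^^ n) y)"
    using tree_isomD(2)[OF a tree_isomD(1)[OF ai w] ai_funpow_in_TV[OF y_in_TV]] .
  moreover have "a ((ai ^^ n) y) = (ai ^^ m) y" unfolding n_def by (simp add: inv1 ai_funpow_in_TV[OF y_in_TV])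
  ultimately have e: "tdist (ai w) ((ai ^^ n) y) = tdist w ((ai ^^ m) y)" using inv1[OF w] by simp
  have s2: "int (tdist w ((ai ^^ m) y)) = axis_coord w + int (m * tlen)"
    using of_nat_tdist_axis_pt_ai_funpow[OF L, of m] unfolding m_def by simp
  show ?thesis using s1 s2 e unfolding n_def by (simp add: algebra_simps)
qed

lemma axis_coord_ai_funpow: "axis_pt w \<Longrightarrow> axis_coord ((ai ^^ k) w) = axis_coord w - int (k * tlen)"
proof (induction k)
  case (Suc k)
  have "axis_coord ((ai ^^ Suc k) w) = axis_coord (ai ((ai ^^ k) w))" by simp
  also have "\<dots> = axis_coord ((ai ^^ k) w) - int tlen" using axis_coord_ai[OF axis_pt_ai_funpow[OF Suc.prems]] .
  finally show ?case using Suc by (simp add: algebra_simps)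
qed simp

definition axis_shift :: "int \<Rightarrow> nat list \<Rightarrow> nat list" where
  "axis_shift s = (if 0 \<le> s then a ^^ nat s else ai ^^ nat (- s))"

lemma axis_pt_axis_shift: "axis_pt (axis_shift s y)"
  unfolding axis_shift_def using axis_pt_a_funpow axis_pt_ai_funpow_y by simp

lemma axis_coord_axis_shift: "axis_coord (axis_shift s y) = s * int tlen"
  unfolding axis_shift_def
  using axis_coord_a_funpow[of "nat s"] axis_coord_ai_funpow_y[of "nat (- s)"] by (simp add: algebra_simps)

lemma axis_shift_eq_y_iff: "axis_shift s y = y \<longleftrightarrow> s = 0"
proof
  assume "axis_shift s y = y"
  then show "s = 0" using axis_coord_axis_shift[of s] axis_coord_y tlen_pos by simp
qed (simp add: axis_shift_def)

context
  fixes b assumes b: "tree_isom d b" and ba_commute: "\<And>x. x \<in> TV d \<Longrightarrow> b (a x) = a (b x)"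
begin

lemma b_ai_commute: "x \<in> TV d \<Longrightarrow> b (ai x) = ai (b x)"
proof -
  assume x: "x \<in> TV d"
  have aix: "ai x \<in> TV d" using tree_isomD(1)[OF ai x] .
  have "b x = a (b (ai x))" using ba_commute[OF aix] inv1[OF x] by simp
  then have "ai (b x) = ai (a (b (ai x)))" by simp
  also have "\<dots> = b (ai x)" using inv2[OF tree_isomD(1)[OF b aix]] .
  finally show ?thesis by simp
qed

lemma axis_coord_b:
  assumes L: "axis_pt z"
  shows "axis_coord (b z) = axis_coord z + axis_coord (b y)"
proof -
  have z: "z \<in> TV d" using L unfolding axis_pt_def by auto
  have Lbz: "axis_pt (b z)" using axis_pt_commuting_image[OF L b ba_commute] .
  have Lby: "axis_pt (b y)" using axis_pt_commuting_image[OF axis_pt_y b ba_commute] .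
  define n where "n = tdist z y + nat \<bar>axis_coord (b y) - axis_coord (b z)\<bar>"
  have s1: "int (tdist z ((ai ^^ n) y)) = axis_coord z + int (n * tlen)"
    using of_nat_tdist_axis_pt_ai_funpow[OF L, of n] unfolding n_def by simp
  have bn: "b ((ai ^^ n) y) = (ai ^^ n) (b y)"
    using funpow_commute_on[of "TV d" ai b, OF tree_isomD(1)[OF ai] tree_isomD(1)[OF b] _ y_in_TV] b_ai_commute by (metis)
  have e: "tdist z ((ai ^^ n) y) = tdist (b z) ((ai ^^ n) (b y))"
    using tree_isomD(2)[OF b z ai_funpow_in_TV[OF y_in_TV, of n]] bn by simp
  have Lw: "axis_pt ((ai ^^ n) (b y))" using axis_pt_ai_funpow[OF Lby] .
  have bw: "axis_coord ((ai ^^ n) (b y)) = axis_coord (b y) - int (n * tlen)" using axis_coord_ai_funpow[OF Lby] .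
  have "n \<le> n * tlen" using tlen_pos by simp
  then have "int n \<le> int (n * tlen)" by linarith
  moreover have "axis_coord (b y) - axis_coord (b z) \<le> int n" unfolding n_def by simp
  ultimately have "axis_coord ((ai ^^ n) (b y)) \<le> axis_coord (b z)" using bw by linarith
  then have "int (tdist ((ai ^^ n) (b y)) (b z)) = axis_coord (b z) - axis_coord ((ai ^^ n) (b y))"
    using of_nat_tdist_axis_coord[OF Lw Lbz] by simp
  then show ?thesis using s1 e bw by (simp add: tdist_comm)
qed

lemma axis_pt_b_funpow: "axis_pt ((b ^^ n) y)"
  by (induction n) (auto simp: axis_pt_y intro: axis_pt_commuting_image[OF _ b ba_commute])

lemma axis_coord_b_funpow: "axis_coord ((b ^^ n) y) = int n * axis_coord (b y)"
proof (induction n)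
  case 0 then show ?case using axis_coord_y by simp
next
  case (Suc n)
  have "axis_coord ((b ^^ Suc n) y) = axis_coord (b ((b ^^ n) y))" by simp
  also have "\<dots> = axis_coord ((b ^^ n) y) + axis_coord (b y)" using axis_coord_b[OF axis_pt_b_funpow] .
  finally show ?case using Suc by (simp add: algebra_simps)
qed

lemma b_funpow_tlen_axis_shift: "(b ^^ tlen) y = axis_shift (axis_coord (b y)) y"
proof -
  have "axis_coord ((b ^^ tlen) y) = axis_coord (axis_shift (axis_coord (b y)) y)"
    using axis_coord_b_funpow[of tlen] axis_coord_axis_shift by simp
  then show ?thesis using axis_coord_inj[OF axis_pt_b_funpow axis_pt_axis_shift] by blast
qed

lemma commuting_translates_along_axis: "\<exists>s. (b ^^ tlen) y = axis_shift s y \<and> (s = 0 \<longrightarrow> b y = y)"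
proof (intro exI conjI impI)
  show "(b ^^ tlen) y = axis_shift (axis_coord (b y)) y" by (rule b_funpow_tlen_axis_shift)
  assume "axis_coord (b y) = 0"
  then show "b y = y"
    using axis_coord_inj[OF axis_pt_commuting_image[OF axis_pt_y b ba_commute] axis_pt_y] axis_coord_y
    by simp
qed

end

end

section \<open>Colourings and local permutations\<close>

lemma tadj_sym: "tadj d v w \<Longrightarrow> tadj d w v"
  unfolding tadj_def by blast

lemma tadj_neq: "tadj d v w \<Longrightarrow> v \<noteq> w"
  using tadj_iff_tdist[of d v w] by auto

lemma edge_in_Ev: "tadj d v w \<Longrightarrow> {v, w} \<in> Ev d v"
  unfolding Ev_def TE_def by blast

lemma Ev_obtain_neighbour: "e \<in> Ev d v \<Longrightarrow> \<exists>w. tadj d v w \<and> e = {v, w}"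
  unfolding Ev_def TE_def by (auto dest: tadj_sym simp: insert_commute)

lemma Ev_subset_TV: "e \<in> Ev d v \<Longrightarrow> e \<subseteq> TV d"
  using Ev_obtain_neighbour[of e d v] unfolding tadj_def by auto

lemma AutT_image_Ev: "g \<in> AutT d \<Longrightarrow> v \<in> TV d \<Longrightarrow> e \<in> Ev d v \<Longrightarrow> g ` e \<in> Ev d (g v)"
proof -
  assume g: "g \<in> AutT d" and v: "v \<in> TV d" and e: "e \<in> Ev d v"
  obtain w where w: "tadj d v w" "e = {v, w}" using Ev_obtain_neighbour[OF e] by blast
  have "tadj d (g v) (g w)" using AutT_D(4)[OF g] w(1) v unfolding tadj_def by blast
  then show ?thesis using w edge_in_Ev by simp
qed

lemma finite_tdist_ball: "finite {x \<in> TV d. tdist r0 x \<le> m}"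
proof -
  have "{x \<in> TV d. tdist r0 x \<le> m} \<subseteq> {xs. set xs \<subseteq> Omg d \<and> length xs \<le> length r0 + m}"
  proof
    fix x assume x: "x \<in> {x \<in> TV d. tdist r0 x \<le> m}"
    have "length x \<le> length r0 + m"
      using x lcp_len_le_length1[of r0 x] lcp_len_le_length2[of r0 x] unfolding tdist_def by auto
    then show "x \<in> {xs. set xs \<subseteq> Omg d \<and> length xs \<le> length r0 + m}" using x unfolding TV_def by auto
  qed
  moreover have "finite {xs. set xs \<subseteq> Omg d \<and> length xs \<le> length r0 + m}"
    by (rule finite_lists_length_le) (simp add: Omg_def)
  ultimately show ?thesis by (rule finite_subset)
qed

lemma BijGroup_mult: "g \<in> Bij S \<Longrightarrow> f \<in> Bij S \<Longrightarrow> g \<otimes>\<^bsub>BijGroup S\<^esub> f = compose S g f"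
  by (simp add: BijGroup_def)

lemma BijGroup_carrier: "carrier (BijGroup S) = Bij S"
  by (simp add: BijGroup_def)

lemma BijGroup_one: "\<one>\<^bsub>BijGroup S\<^esub> = (\<lambda>x\<in>S. x)"
  by (simp add: BijGroup_def)

lemma acts_freely_agree:
  assumes F: "subgroup F (BijGroup \<Omega>)" and free: "acts_freely \<Omega> F"
    and s: "s \<in> F" and s': "s' \<in> F" and \<alpha>: "\<alpha> \<in> \<Omega>" "s \<alpha> = s' \<alpha>" and \<beta>: "\<beta> \<in> \<Omega>"
  shows "s \<beta> = s' \<beta>"
proof -
  interpret S: group "BijGroup \<Omega>" by (rule group_BijGroup)
  have FB: "x \<in> Bij \<Omega>" if "x \<in> F" for x
    using subgroup.subset[OF F] that BijGroup_carrier by blast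
  define h where "h = inv\<^bsub>BijGroup \<Omega>\<^esub> s' \<otimes>\<^bsub>BijGroup \<Omega>\<^esub> s"
  have hF: "h \<in> F" unfolding h_def using s s' F by (simp add: subgroup.m_closed subgroup.m_inv_closed)
  have "s \<in> carrier (BijGroup \<Omega>)" "s' \<in> carrier (BijGroup \<Omega>)"
    using subgroup.subset[OF F] s s' by auto
  then have "s' \<otimes>\<^bsub>BijGroup \<Omega>\<^esub> h = s" unfolding h_def by (simp add: S.m_assoc[symmetric])
  then have s_eq: "s x = s' (h x)" if "x \<in> \<Omega>" for x
    using BijGroup_mult[OF FB[OF s'] FB[OF hF]] that by (metis compose_eq)
  have "h \<alpha> = \<alpha>"
  proof (rule inj_onD[of s' \<Omega>])
    show "inj_on s' \<Omega>" using FB[OF s'] unfolding Bij_def bij_betw_def by blast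
    show "h \<alpha> \<in> \<Omega>" using FB[OF hF] \<alpha>(1) unfolding Bij_def bij_betw_def by blast
  qed (use s_eq \<alpha> in auto)
  then have "h \<beta> = \<beta>" using free hF \<alpha>(1) \<beta> unfolding acts_freely_def by blast
  then show ?thesis using s_eq[OF \<beta>] by simp
qed

locale coloured_tree =
  fixes d :: nat and c :: "nat list set \<Rightarrow> nat"
  assumes legal_c: "legal_coloring d c"
begin

lemma c_bij_betw: "v \<in> TV d \<Longrightarrow> bij_betw c (Ev d v) (Omg d)"
  using legal_c unfolding legal_coloring_def by blast

lemma c_in_Omg: "v \<in> TV d \<Longrightarrow> e \<in> Ev d v \<Longrightarrow> c e \<in> Omg d"
  using c_bij_betw bij_betwE by blast

lemma c_inj: "v \<in> TV d \<Longrightarrow> e \<in> Ev d v \<Longrightarrow> e' \<in> Ev d v \<Longrightarrow> c e = c e' \<Longrightarrow> e = e'"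
  using c_bij_betw unfolding bij_betw_def inj_on_def by blast

lemma c_surj: assumes "v \<in> TV d" "\<alpha> \<in> Omg d" shows "\<exists>e\<in>Ev d v. c e = \<alpha>"
proof -
  have "\<alpha> \<in> c ` Ev d v" using c_bij_betw[OF assms(1)] assms(2) unfolding bij_betw_def by simp
  then show ?thesis by blast
qed

lemma the_edge_of_colour:
  assumes "v \<in> TV d" "e \<in> Ev d v"
  shows "(THE e'. e' \<in> Ev d v \<and> c e' = c e) = e"
proof (rule the_equality)
  fix e' assume "e' \<in> Ev d v \<and> c e' = c e"
  then show "e' = e" using c_inj[OF assms(1) _ assms(2)] by blast
qed (use assms in simp)

lemma locperm_colour: "v \<in> TV d \<Longrightarrow> e \<in> Ev d v \<Longrightarrow> locperm d c g v (c e) = c (g ` e)"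
  unfolding locperm_def using the_edge_of_colour c_in_Omg by simp

lemma locperm_Bij:
  assumes g: "g \<in> AutT d" and v: "v \<in> TV d"
  shows "locperm d c g v \<in> Bij (Omg d)"
proof -
  let ?s = "locperm d c g v"
  have gv: "g v \<in> TV d" using AutT_D(1)[OF g v] .
  have into: "?s \<alpha> \<in> Omg d" if \<alpha>: "\<alpha> \<in> Omg d" for \<alpha>
  proof -
    obtain e where e: "e \<in> Ev d v" "c e = \<alpha>" using c_surj[OF v \<alpha>] by blast
    show ?thesis using locperm_colour[OF v e(1), of g] e c_in_Omg[OF gv AutT_image_Ev[OF g v e(1)]] by simp
  qed
  have inj: "inj_on ?s (Omg d)"
  proof (rule inj_onI)
    fix \<alpha> \<alpha>' assume a: "\<alpha> \<in> Omg d" "\<alpha>' \<in> Omg d" "?s \<alpha> = ?s \<alpha>'"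
    obtain e where e: "e \<in> Ev d v" "c e = \<alpha>" using c_surj[OF v a(1)] by blast
    obtain e' where e': "e' \<in> Ev d v" "c e' = \<alpha>'" using c_surj[OF v a(2)] by blast
    have "c (g ` e) = c (g ` e')"
      using a(3) locperm_colour[OF v e(1), of g] locperm_colour[OF v e'(1), of g] e e' by simp
    then have "g ` e = g ` e'"
      using c_inj[OF gv AutT_image_Ev[OF g v e(1)] AutT_image_Ev[OF g v e'(1)]] by blast
    then have "e = e'"
      using inj_on_image_eq_iff[OF AutT_D(2)[OF g] Ev_subset_TV[OF e(1)] Ev_subset_TV[OF e'(1)]] by blast
    then show "\<alpha> = \<alpha>'" using e e' by simp
  qed
  have fin: "finite (Omg d)" by (simp add: Omg_def)
  have "?s ` Omg d = Omg d" using endo_inj_surj[OF fin _ inj] into by blast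
  then have "bij_betw ?s (Omg d) (Omg d)" using inj unfolding bij_betw_def by simp
  moreover have "?s \<in> extensional (Omg d)" unfolding locperm_def by simp
  ultimately show ?thesis unfolding Bij_def by simp
qed

lemma locperm_compose:
  assumes g: "g \<in> AutT d" and h: "h \<in> AutT d" and v: "v \<in> TV d"
  shows "locperm d c (compose (TV d) g h) v = compose (Omg d) (locperm d c g (h v)) (locperm d c h v)"
proof (rule ext)
  fix \<alpha>
  show "locperm d c (compose (TV d) g h) v \<alpha> = compose (Omg d) (locperm d c g (h v)) (locperm d c h v) \<alpha>"
  proof (cases "\<alpha> \<in> Omg d")
    case False then show ?thesis unfolding locperm_def compose_def by simp
  next
    case True
    obtain e where e: "e \<in> Ev d v" "c e = \<alpha>" using c_surj[OF v True] by blast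
    have hv: "h v \<in> TV d" using AutT_D(1)[OF h v] .
    have he: "h ` e \<in> Ev d (h v)" using AutT_image_Ev[OF h v e(1)] .
    have "compose (TV d) g h ` e = g ` h ` e" using Ev_subset_TV[OF e(1)] unfolding compose_def by auto
    then have "locperm d c (compose (TV d) g h) v \<alpha> = c (g ` h ` e)"
      using locperm_colour[OF v e(1)] e by simp
    moreover have "compose (Omg d) (locperm d c g (h v)) (locperm d c h v) \<alpha> = c (g ` h ` e)"
      using True locperm_colour[OF v e(1), of h] locperm_colour[OF hv he, of g] e
      unfolding compose_def by simp
    ultimately show ?thesis by simp
  qed
qed

lemma locperm_id:
  assumes v: "v \<in> TV d"
  shows "locperm d c (\<lambda>x\<in>TV d. x) v = (\<lambda>x\<in>Omg d. x)"
proof (rule ext)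
  fix \<alpha>
  show "locperm d c (\<lambda>x\<in>TV d. x) v \<alpha> = (\<lambda>x\<in>Omg d. x) \<alpha>"
  proof (cases "\<alpha> \<in> Omg d")
    case False then show ?thesis unfolding locperm_def by simp
  next
    case True
    obtain e where e: "e \<in> Ev d v" "c e = \<alpha>" using c_surj[OF v True] by blast
    have "(\<lambda>x\<in>TV d. x) ` e = e" using Ev_subset_TV[OF e(1)] by auto
    then show ?thesis using locperm_colour[OF v e(1)] e True by simp
  qed
qed

end

locale free_colouring = coloured_tree +
  fixes F :: "(nat \<Rightarrow> nat) set"
  assumes F_subgroup: "subgroup F (BijGroup (Omg d))" and free: "acts_freely (Omg d) F"
begin

lemma fixes_neighbours:
  assumes g: "g \<in> AutT d" and v: "v \<in> TV d" "g v = v" and p: "tadj d v p" "g p = p"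
    and sF: "locperm d c g v \<in> F" and z: "tadj d v z"
  shows "g z = z"
proof -
  let ?s = "locperm d c g v"
  have ep: "{v, p} \<in> Ev d v" using edge_in_Ev[OF p(1)] .
  have ez: "{v, z} \<in> Ev d v" using edge_in_Ev[OF z] .
  have "?s (c {v, p}) = c {v, p}" using locperm_colour[OF v(1) ep, of g] v p by simp
  then have "?s (c {v, z}) = c {v, z}" using free sF c_in_Omg[OF v(1) ep] c_in_Omg[OF v(1) ez]
    unfolding acts_freely_def by blast
  then have "c (g ` {v, z}) = c {v, z}" using locperm_colour[OF v(1) ez, of g] by simp
  moreover have "g ` {v, z} \<in> Ev d v" using AutT_image_Ev[OF g v(1) ez] v by simp
  ultimately have "g ` {v, z} = {v, z}" using c_inj[OF v(1) _ ez] by blast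
  then have "{v, g z} = {v, z}" using v by simp
  moreover have "z \<noteq> v" using tadj_neq[OF z] by simp
  ultimately show ?thesis by (metis doubleton_eq_iff)
qed

lemma agree_on_neighbours:
  assumes g: "g \<in> AutT d" and g': "g' \<in> AutT d" and p: "p \<in> TV d" "g p = g' p"
    and p': "tadj d p p'" "g p' = g' p'"
    and sF: "locperm d c g p \<in> F" and sF': "locperm d c g' p \<in> F" and w: "tadj d p w"
  shows "g w = g' w"
proof -
  have ep: "{p, p'} \<in> Ev d p" using edge_in_Ev[OF p'(1)] .
  have ew: "{p, w} \<in> Ev d p" using edge_in_Ev[OF w] .
  have "locperm d c g p (c {p, p'}) = locperm d c g' p (c {p, p'})"
    using locperm_colour[OF p(1) ep, of g] locperm_colour[OF p(1) ep, of g'] p p' by simp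
  then have "locperm d c g p (c {p, w}) = locperm d c g' p (c {p, w})"
    using acts_freely_agree[OF F_subgroup free sF sF' c_in_Omg[OF p(1) ep] _ c_in_Omg[OF p(1) ew]]
    by blast
  then have "c (g ` {p, w}) = c (g' ` {p, w})"
    using locperm_colour[OF p(1) ew, of g] locperm_colour[OF p(1) ew, of g'] by simp
  moreover have "g ` {p, w} \<in> Ev d (g p)" using AutT_image_Ev[OF g p(1) ew] .
  moreover have "g' ` {p, w} \<in> Ev d (g p)" using AutT_image_Ev[OF g' p(1) ew] p by simp
  ultimately have "g ` {p, w} = g' ` {p, w}" using c_inj[OF AutT_D(1)[OF g p(1)]] by blast
  then have "{g p, g w} = {g p, g' w}" using p by simp
  moreover have "g w \<noteq> g p"
  proof
    assume "g w = g p"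
    then have "w = p" using AutT_D(2)[OF g] p(1) w unfolding tadj_def inj_on_def by blast
    then show False using tadj_neq[OF w] by simp
  qed
  ultimately show ?thesis by (metis doubleton_eq_iff)
qed

end
section \<open>Vertex stabilisers\<close>

definition (in free_colouring) singularities :: "(nat list \<Rightarrow> nat list) \<Rightarrow> nat list set" where
  "singularities g = {v \<in> TV d. locperm d c g v \<notin> F}"

text \<open>A subgroup H of Sym(T) inside Aut(T) \<inter> G(F). The ambient group is a locale
  parameter only to make its multiplication available as infix notation.\<close>

locale GF_subgroup = free_colouring d c F + group G
  for d c F and G :: "(nat list \<Rightarrow> nat list) monoid" (structure) +
  fixes H
  assumes G_def: "G = BijGroup (TV d)" and H_subgroup: "subgroup H G" and H_AutT: "H \<subseteq> AutT d"
    and finite_singularities: "h \<in> H \<Longrightarrow> finite (singularities h)"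
begin

lemma carrier_G: "carrier G = Bij (TV d)"
  using G_def BijGroup_carrier by simp

lemma H_carrier: "x \<in> H \<Longrightarrow> x \<in> carrier G"
  using subgroup.subset[OF H_subgroup] by blast

lemma H_AutT_mem: "x \<in> H \<Longrightarrow> x \<in> AutT d"
  using H_AutT by blast

lemma mult_eq_compose: "x \<in> carrier G \<Longrightarrow> y \<in> carrier G \<Longrightarrow> x \<otimes> y = compose (TV d) x y"
  using BijGroup_mult carrier_G G_def by simp

lemma mult_apply: "x \<in> carrier G \<Longrightarrow> y \<in> carrier G \<Longrightarrow> w \<in> TV d \<Longrightarrow> (x \<otimes> y) w = x (y w)"
  by (simp add: mult_eq_compose compose_def)

lemma one_eq: "\<one> = (\<lambda>x\<in>TV d. x)"
  unfolding G_def BijGroup_one ..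

lemma one_apply: "w \<in> TV d \<Longrightarrow> \<one> w = w"
  by (simp add: one_eq)

lemma apply_inv_apply: "x \<in> carrier G \<Longrightarrow> w \<in> TV d \<Longrightarrow> x ((inv x) w) = w"
  using mult_apply[of x "inv x" w] one_apply[of w] by simp

lemma inv_apply_apply: "x \<in> carrier G \<Longrightarrow> w \<in> TV d \<Longrightarrow> (inv x) (x w) = w"
  using mult_apply[of "inv x" x w] one_apply[of w] by simp

lemma carrier_apply_in_TV: "x \<in> carrier G \<Longrightarrow> w \<in> TV d \<Longrightarrow> x w \<in> TV d"
  using carrier_G Bij_imp_funcset by blast

lemma nat_pow_apply: "x \<in> carrier G \<Longrightarrow> w \<in> TV d \<Longrightarrow> (x [^] (n::nat)) w = (x ^^ n) w"
proof (induction n arbitrary: w)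
  case (Suc n)
  have "(x [^] Suc n) w = (x [^] n) (x w)" using mult_apply[of "x [^] n" x w] Suc.prems by simp
  also have "\<dots> = (x ^^ n) (x w)" using Suc carrier_apply_in_TV by blast
  finally show ?case by (simp add: funpow_swap1)
qed (simp add: one_apply)

lemma carrier_eqI: "x \<in> carrier G \<Longrightarrow> y \<in> carrier G \<Longrightarrow> (\<And>w. w \<in> TV d \<Longrightarrow> x w = y w) \<Longrightarrow> x = y"
  using carrier_G Bij_imp_extensional extensionalityI by metis

lemma commute_apply: "x \<in> carrier G \<Longrightarrow> y \<in> carrier G \<Longrightarrow> x \<otimes> y = y \<otimes> x \<Longrightarrow> w \<in> TV d \<Longrightarrow> x (y w) = y (x w)"
  using mult_apply by metis

lemma locperm_mult:
  assumes "x \<in> H" "y \<in> H" "v \<in> TV d"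
  shows "locperm d c (x \<otimes> y) v = locperm d c x (y v) \<otimes>\<^bsub>BijGroup (Omg d)\<^esub> locperm d c y v"
  using assms locperm_compose[of x y v] BijGroup_mult[OF locperm_Bij locperm_Bij] mult_eq_compose
    H_carrier H_AutT_mem AutT_D(1) by simp

lemma singularities_mult:
  assumes x: "x \<in> H" and y: "y \<in> H" and v: "v \<in> singularities (x \<otimes> y)"
  shows "y v \<in> singularities x \<or> v \<in> singularities y"
proof -
  have vW: "v \<in> TV d" using v unfolding singularities_def by auto
  have "\<not> (locperm d c x (y v) \<in> F \<and> locperm d c y v \<in> F)"
    using v locperm_mult[OF x y vW] subgroup.m_closed[OF F_subgroup] unfolding singularities_def by auto
  then show ?thesis
    unfolding singularities_def using vW AutT_D(1)[OF H_AutT_mem[OF y]] by auto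
qed

lemma singularities_one: "singularities \<one> = {}"
proof -
  have "(\<lambda>x\<in>Omg d. x) \<in> F" using subgroup.one_closed[OF F_subgroup] BijGroup_one by metis
  then show ?thesis using locperm_id by (auto simp: singularities_def one_eq)
qed

lemma singularities_inv:
  assumes x: "x \<in> H" and v: "v \<in> singularities (inv x)"
  shows "(inv x) v \<in> singularities x"
proof (rule ccontr)
  interpret O: group "BijGroup (Omg d)" by (rule group_BijGroup)
  have vW: "v \<in> TV d" and xi: "inv x \<in> H"
    using v subgroup.m_inv_closed[OF H_subgroup x] unfolding singularities_def by auto
  have inv_v: "(inv x) v \<in> TV d" using carrier_apply_in_TV[OF H_carrier[OF xi] vW] .
  have B: "locperm d c x ((inv x) v) \<in> carrier (BijGroup (Omg d))"
    "locperm d c (inv x) v \<in> carrier (BijGroup (Omg d))"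
    using locperm_Bij[OF H_AutT_mem[OF x] inv_v] locperm_Bij[OF H_AutT_mem[OF xi] vW]
    by (simp_all add: BijGroup_carrier)
  have "locperm d c x ((inv x) v) \<otimes>\<^bsub>BijGroup (Omg d)\<^esub> locperm d c (inv x) v = \<one>\<^bsub>BijGroup (Omg d)\<^esub>"
    using locperm_mult[OF x xi vW] H_carrier[OF x] locperm_id[OF vW] by (simp add: one_eq BijGroup_one)
  then have "inv\<^bsub>BijGroup (Omg d)\<^esub> (locperm d c (inv x) v) = locperm d c x ((inv x) v)"
    using O.inv_equality B by blast
  then have "locperm d c (inv x) v = inv\<^bsub>BijGroup (Omg d)\<^esub> (locperm d c x ((inv x) v))"
    using O.inv_inv[OF B(2)] by simp
  moreover assume "(inv x) v \<notin> singularities x"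
  ultimately have "locperm d c (inv x) v \<in> F"
    using inv_v subgroup.m_inv_closed[OF F_subgroup] unfolding singularities_def by auto
  then show False using v unfolding singularities_def by auto
qed

definition bounded_stabiliser :: "nat list \<Rightarrow> nat \<Rightarrow> (nat list \<Rightarrow> nat list) set" where
  "bounded_stabiliser r0 n = {g \<in> H. g r0 = r0 \<and> (\<forall>v\<in>singularities g. tdist r0 v \<le> n)}"

lemma subgroup_bounded_stabiliser:
  assumes r0: "r0 \<in> TV d"
  shows "subgroup (bounded_stabiliser r0 n) G"
proof (rule subgroup.intro)
  show "bounded_stabiliser r0 n \<subseteq> carrier G"
    unfolding bounded_stabiliser_def using H_carrier by blast
next
  fix g h assume "g \<in> bounded_stabiliser r0 n" "h \<in> bounded_stabiliser r0 n"
  then have g: "g \<in> H" "g r0 = r0" "\<forall>v\<in>singularities g. tdist r0 v \<le> n"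
    and h: "h \<in> H" "h r0 = r0" "\<forall>v\<in>singularities h. tdist r0 v \<le> n"
    unfolding bounded_stabiliser_def by auto
  have "tdist r0 v \<le> n" if v: "v \<in> singularities (g \<otimes> h)" for v
  proof -
    have vW: "v \<in> TV d" using v unfolding singularities_def by auto
    have "tdist r0 (h v) = tdist r0 v" using AutT_tdist[OF H_AutT_mem[OF h(1)] r0 vW] h(2) by simp
    then show ?thesis using singularities_mult[OF g(1) h(1) v] g(3) h(3) by fastforce
  qed
  then show "g \<otimes> h \<in> bounded_stabiliser r0 n"
    unfolding bounded_stabiliser_def
    using g h r0 mult_apply H_carrier subgroup.m_closed[OF H_subgroup] by auto
next
  show "\<one> \<in> bounded_stabiliser r0 n"
    unfolding bounded_stabiliser_def
    using subgroup.one_closed[OF H_subgroup] one_apply[OF r0] singularities_one by simp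
next
  fix g assume "g \<in> bounded_stabiliser r0 n"
  then have g: "g \<in> H" "g r0 = r0" "\<forall>v\<in>singularities g. tdist r0 v \<le> n"
    unfolding bounded_stabiliser_def by auto
  have gi: "inv g \<in> H" using subgroup.m_inv_closed[OF H_subgroup g(1)] .
  have gi_r0: "(inv g) r0 = r0" using inv_apply_apply[OF H_carrier[OF g(1)] r0] g(2) by simp
  have "tdist r0 v \<le> n" if v: "v \<in> singularities (inv g)" for v
  proof -
    have vW: "v \<in> TV d" using v unfolding singularities_def by auto
    have "tdist r0 ((inv g) v) = tdist r0 v" using AutT_tdist[OF H_AutT_mem[OF gi] r0 vW] gi_r0 by simp
    then show ?thesis using singularities_inv[OF g(1) v] g(3) by fastforce
  qed
  then show "inv g \<in> bounded_stabiliser r0 n"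
    unfolding bounded_stabiliser_def using gi gi_r0 by blast
qed

text \<open>Outside the ball of radius n + 1 every vertex x has a neighbour p on the geodesic to
  r0 that is not singular, and whose own neighbour towards r0 is already known; freeness of
  F then determines the image of x.\<close>

lemma bounded_stabiliser_eq_if_eq_on_ball:
  assumes r0: "r0 \<in> TV d" and g: "g \<in> bounded_stabiliser r0 n" and g': "g' \<in> bounded_stabiliser r0 n"
    and ball: "\<And>x. x \<in> TV d \<Longrightarrow> tdist r0 x \<le> Suc n \<Longrightarrow> g x = g' x"
  shows "g = g'"
proof -
  have gH: "g \<in> H" "\<forall>v\<in>singularities g. tdist r0 v \<le> n"
    and gH': "g' \<in> H" "\<forall>v\<in>singularities g'. tdist r0 v \<le> n"
    using g g' unfolding bounded_stabiliser_def by auto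
  have "\<forall>x\<in>TV d. tdist r0 x = k \<longrightarrow> g x = g' x" for k
  proof (induction k rule: less_induct)
    case (less k)
    show ?case
    proof (intro ballI impI)
      fix x assume x: "x \<in> TV d" "tdist r0 x = k"
      show "g x = g' x"
      proof (cases "k \<le> Suc n")
        case True
        then show ?thesis using ball x by simp
      next
        case False
        then obtain r where r: "k = Suc r" "Suc n \<le> r" by (metis Suc_le_D not_less_eq_eq)
        obtain p where p: "p \<in> TV d" "tdist r0 p = r" "tdist p x = 1"
          using tdist_geodesic_point[OF r0 x(1), of r] x r by auto
        obtain p' where p': "p' \<in> TV d" "tdist r0 p' = r - 1" "tdist p' p = 1"
          using tdist_geodesic_point[OF r0 p(1), of "r - 1"] p r by auto
        have "p \<notin> singularities g" "p \<notin> singularities g'" using gH(2) gH'(2) p r by auto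
        then have "locperm d c g p \<in> F" "locperm d c g' p \<in> F" using p unfolding singularities_def by auto
        moreover have "g p = g' p" "g p' = g' p'" using less.IH[of r] less.IH[of "r - 1"] p p' r by auto
        moreover have "tadj d p p'" "tadj d p x" using tadj_iff_tdist p p' x by (simp_all add: tdist_comm)
        ultimately show ?thesis
          using agree_on_neighbours[OF H_AutT_mem[OF gH(1)] H_AutT_mem[OF gH'(1)] p(1)] by blast
      qed
    qed
  qed
  then show ?thesis using carrier_eqI H_carrier gH(1) gH'(1) by blast
qed

lemma finite_bounded_stabiliser:
  assumes r0: "r0 \<in> TV d"
  shows "finite (bounded_stabiliser r0 n)"
proof -
  define B where "B = {x \<in> TV d. tdist r0 x \<le> Suc n}"
  have "inj_on (\<lambda>g. restrict g B) (bounded_stabiliser r0 n)"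
  proof (rule inj_onI)
    fix g g' assume g: "g \<in> bounded_stabiliser r0 n" and g': "g' \<in> bounded_stabiliser r0 n"
      and eq: "restrict g B = restrict g' B"
    show "g = g'"
    proof (rule bounded_stabiliser_eq_if_eq_on_ball[OF r0 g g'])
      fix x assume "x \<in> TV d" "tdist r0 x \<le> Suc n"
      then show "g x = g' x" using fun_cong[OF eq, of x] unfolding B_def by simp
    qed
  qed
  moreover have "g x \<in> B" if g: "g \<in> bounded_stabiliser r0 n" and x: "x \<in> B" for g x
  proof -
    have "g \<in> AutT d" "g r0 = r0" using g H_AutT unfolding bounded_stabiliser_def by auto
    then show "g x \<in> B" using x AutT_D(1) AutT_tdist[OF _ r0] unfolding B_def by fastforce
  qed
  then have "(\<lambda>g. restrict g B) ` bounded_stabiliser r0 n \<subseteq> (\<Pi>\<^sub>E x\<in>B. B)" by auto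
  moreover have "finite (\<Pi>\<^sub>E x\<in>B. B)"
    using finite_tdist_ball unfolding B_def by (intro finite_PiE) auto
  ultimately show ?thesis by (meson finite_imageD finite_subset)
qed

lemma finite_generate_if_fixes_vertex:
  assumes T: "finite T" "T \<subseteq> H" and r0: "r0 \<in> TV d" and fix_r0: "\<forall>t\<in>T. t r0 = r0"
  shows "finite (generate G T)"
proof -
  define n where "n = (\<Sum>t\<in>T. Max (insert 0 (tdist r0 ` singularities t)))"
  have "tdist r0 v \<le> n" if t: "t \<in> T" and v: "v \<in> singularities t" for t v
  proof -
    have "tdist r0 v \<le> Max (insert 0 (tdist r0 ` singularities t))"
      using finite_singularities T(2) t v by (intro Max_ge) auto
    also have "\<dots> \<le> n" unfolding n_def using t T(1) by (intro member_le_sum) auto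
    finally show ?thesis .
  qed
  then have "T \<subseteq> bounded_stabiliser r0 n" unfolding bounded_stabiliser_def using T(2) fix_r0 by blast
  then have "generate G T \<subseteq> bounded_stabiliser r0 n"
    using generate_subgroup_incl subgroup_bounded_stabiliser[OF r0] by blast
  then show ?thesis using finite_bounded_stabiliser[OF r0] finite_subset by blast
qed

end

section \<open>Centralisers of hyperbolic elements\<close>

lemma tree_isom_tadj: "tree_isom d g \<Longrightarrow> tadj d x z \<Longrightarrow> tadj d (g x) (g z)"
  using tadj_iff_tdist[of d x z] tadj_iff_tdist[of d "g x" "g z"] tree_isomD[of d g] by metis

lemma finite_invariant_periodic_point:
  assumes fin: "finite N" and ne: "N \<noteq> {}" and inv: "\<And>w. w \<in> N \<Longrightarrow> f w \<in> N"
  shows "\<exists>w\<in>N. \<exists>j>0. (f ^^ j) w = w"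
proof -
  obtain w where w: "w \<in> N" using ne by blast
  have orbit: "(f ^^ i) w \<in> N" for i by (induction i) (auto simp: w inv)
  have "\<not> inj_on (\<lambda>i. (f ^^ i) w) {0..card N}"
  proof
    assume "inj_on (\<lambda>i. (f ^^ i) w) {0..card N}"
    then have "card {0..card N} \<le> card N" using card_inj_on_le[OF _ _ fin] orbit by blast
    then show False by simp
  qed
  then obtain i j where ij: "i < j" "(f ^^ i) w = (f ^^ j) w"
    unfolding inj_on_def by (metis linorder_neqE_nat)
  have "(f ^^ (j - i)) ((f ^^ i) w) = (f ^^ j) w"
    using ij(1) by (metis funpow_add le_add_diff_inverse2 less_imp_le o_apply)
  then have "(f ^^ (j - i)) ((f ^^ i) w) = (f ^^ i) w" using ij(2) by simp
  then show ?thesis using orbit[of i] ij(1) by (intro bexI[of _ "(f ^^ i) w"] exI[of _ "j - i"]) auto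
qed

definition fix_boundary :: "nat \<Rightarrow> (nat list \<Rightarrow> nat list) \<Rightarrow> nat list set" where
  "fix_boundary d k = {w \<in> TV d. k w = w \<and> (\<exists>z. tadj d w z \<and> k z \<noteq> z)}"

lemma fix_boundary_commuting_image:
  assumes a: "tree_isom d a" and k: "tree_isom d k" and comm: "\<And>x. x \<in> TV d \<Longrightarrow> k (a x) = a (k x)"
    and w: "w \<in> fix_boundary d k"
  shows "a w \<in> fix_boundary d k"
proof -
  have wW: "w \<in> TV d" "k w = w" using w unfolding fix_boundary_def by auto
  obtain z where z: "tadj d w z" "k z \<noteq> z" using w unfolding fix_boundary_def by auto
  have zW: "z \<in> TV d" using z(1) unfolding tadj_def by auto
  have "k (a z) \<noteq> a z"
  proof
    assume "k (a z) = a z"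
    then have "a (k z) = a z" using comm[OF zW] by simp
    then show False using tree_isom_inj[OF a tree_isomD(1)[OF k zW] zW] z(2) by blast
  qed
  moreover have "k (a w) = a w" using comm[OF wW(1)] wW by simp
  ultimately show ?thesis
    unfolding fix_boundary_def using tree_isom_tadj[OF a z(1)] tree_isomD(1)[OF a wW(1)] by blast
qed

lemma fixes_all_if_fix_boundary_empty:
  assumes r0: "r0 \<in> TV d" "k r0 = r0" and empty: "fix_boundary d k = {}" and x: "x \<in> TV d"
  shows "k x = x"
proof -
  have "\<forall>x\<in>TV d. tdist r0 x = n \<longrightarrow> k x = x" for n
  proof (induction n)
    case 0 then show ?case using r0 by (auto simp: tdist_eq_0_iff)
  next
    case (Suc r)
    show ?case
    proof (intro ballI impI)
      fix x assume x: "x \<in> TV d" "tdist r0 x = Suc r"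
      obtain p where p: "p \<in> TV d" "tdist r0 p = r" "tdist p x = 1"
        using tdist_geodesic_point[OF r0(1) x(1), of r] x by auto
      have "k p = p" using Suc p by blast
      moreover have "tadj d p x" using tadj_iff_tdist p x by simp
      ultimately show "k x = x" using empty p(1) unfolding fix_boundary_def by blast
    qed
  qed
  then show ?thesis using x by blast
qed

lemma fixed_neighbour_towards_fixed_vertex:
  assumes k: "tree_isom d k" and w: "w \<in> TV d" "k w = w" and u: "u \<in> TV d" "k u = u" "u \<noteq> w"
  shows "\<exists>p. tadj d w p \<and> k p = p"
proof -
  have pos: "0 < tdist w u" using u tdist_eq_0_iff[of w u] by auto
  then obtain p where p: "p \<in> TV d" "tdist w p = 1" "tdist p u = tdist w u - 1"
    using tdist_geodesic_point[OF w(1) u(1), of 1] by auto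
  have "tdist w p + tdist p u = tdist w u" using p pos by simp
  then have "k p = p" using tree_isom_fixes_geodesic[OF k w u(1,2) p(1)] by simp
  moreover have "tadj d w p" using tadj_iff_tdist w p by simp
  ultimately show ?thesis by blast
qed

context free_colouring
begin

lemma fix_boundary_subset_singularities:
  assumes k: "k \<in> AutT d" and nb: "\<And>w. w \<in> TV d \<Longrightarrow> k w = w \<Longrightarrow> \<exists>p. tadj d w p \<and> k p = p"
  shows "fix_boundary d k \<subseteq> singularities k"
proof
  fix w assume w: "w \<in> fix_boundary d k"
  then have wW: "w \<in> TV d" "k w = w" unfolding fix_boundary_def by auto
  obtain p where p: "tadj d w p" "k p = p" using nb[OF wW] by blast
  obtain z where z: "tadj d w z" "k z \<noteq> z" using w unfolding fix_boundary_def by auto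
  show "w \<in> singularities k"
    using fixes_neighbours[OF k wW p _ z(1)] z(2) wW(1) unfolding singularities_def by blast
qed

text \<open>The boundary of the fixed subtree of k is finite (it consists of singularities) and
  invariant under a, hence contains an a-periodic vertex unless it is empty; a hyperbolic
  isometry has no periodic vertices.\<close>

lemma commuting_hyperbolic_trivial:
  assumes k: "k \<in> AutT d" and fin: "finite (singularities k)"
    and a: "tree_isom d a" and ax: "on_axis d a y"
    and r0: "r0 \<in> TV d" "k r0 = r0" and comm: "\<And>x. x \<in> TV d \<Longrightarrow> k (a x) = a (k x)"
    and x: "x \<in> TV d"
  shows "k x = x"
proof -
  have ki: "tree_isom d k" using AutT_tree_isom[OF k] .
  have ar0: "a r0 \<in> TV d" "a r0 \<noteq> r0" "k (a r0) = a r0"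
    using tree_isomD(1)[OF a r0(1)] on_axis_no_periodic_point[OF a ax r0(1), of 1] comm[OF r0(1)] r0
    by auto
  have "\<exists>p. tadj d w p \<and> k p = p" if "w \<in> TV d" "k w = w" for w
    using fixed_neighbour_towards_fixed_vertex[OF ki that] ar0 r0 by metis
  then have "finite (fix_boundary d k)"
    using fix_boundary_subset_singularities[OF k] fin finite_subset by metis
  moreover have "\<not> (\<exists>w\<in>fix_boundary d k. \<exists>j>0. (a ^^ j) w = w)"
    using on_axis_no_periodic_point[OF a ax] unfolding fix_boundary_def by blast
  ultimately have "fix_boundary d k = {}"
    using finite_invariant_periodic_point fix_boundary_commuting_image[OF a ki comm] by metis
  then show ?thesis using fixes_all_if_fix_boundary_empty[where k = k, OF r0] x by blast
qed

end

section \<open>Infinite subgroups contain hyperbolic elements\<close>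

lemma subset_generate: "S \<subseteq> generate G S"
  by (simp add: generate.incl subsetI)

text \<open>Schreier generators for the subgroup of index at most two on which P holds, with
  transversal {1, t} and coset representative rep x.\<close>

locale index_two_schreier = group G for G (structure) +
  fixes T t and P :: "'a \<Rightarrow> bool"
  assumes T: "T \<subseteq> carrier G" and t: "t \<in> generate G T" "\<not> P t"
    and P: "\<And>x y. x \<in> generate G T \<Longrightarrow> y \<in> generate G T \<Longrightarrow> P (x \<otimes> y) \<longleftrightarrow> (P x \<longleftrightarrow> P y)"
begin

definition rep :: "'a \<Rightarrow> 'a" where "rep x = (if P x then \<one> else t)"

definition T0 :: "'a set" where "T0 = (\<lambda>(r, s). r \<otimes> s \<otimes> inv (rep (r \<otimes> s))) ` ({\<one>, t} \<times> T)"

abbreviation K where "K \<equiv> generate G T"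

lemma K: "subgroup K G"
  using generate_is_subgroup[OF T] .

lemma K_carrier: "y \<in> K \<Longrightarrow> y \<in> carrier G"
  using subgroup.subset[OF K] by blast

lemma P_one: "P \<one>"
  using P[of \<one> \<one>] subgroup.one_closed[OF K] by simp

lemma P_inv: "z \<in> K \<Longrightarrow> P (inv z) \<longleftrightarrow> P z"
  using P[of z "inv z"] subgroup.m_inv_closed[OF K] K_carrier P_one by auto

lemma rep: "rep y \<in> {\<one>, t}" "rep y \<in> K" "P (rep y) \<longleftrightarrow> P y"
  unfolding rep_def using t P_one subgroup.one_closed[OF K] by simp_all

lemma transversal_K: "r \<in> {\<one>, t} \<Longrightarrow> r \<in> K"
  using t(1) subgroup.one_closed[OF K] by auto

lemma rep_transversal: "r \<in> {\<one>, t} \<Longrightarrow> rep r = r"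
  using t(2) P_one unfolding rep_def by auto

lemma rep_mult:
  assumes "y \<in> K" "z \<in> K"
  shows "rep (rep y \<otimes> z) = rep (y \<otimes> z)"
proof -
  have "P (rep y \<otimes> z) \<longleftrightarrow> P (y \<otimes> z)" using P[OF rep(2) assms(2)] P[OF assms] rep(3)[of y] by blast
  then show ?thesis by (cases "P (y \<otimes> z)") (simp_all add: rep_def)
qed

lemma schreier_invariant:
  assumes x: "x \<in> K" and r: "r \<in> {\<one>, t}"
  shows "r \<otimes> x \<otimes> inv (rep (r \<otimes> x)) \<in> generate G T0"
proof -
  have Km: "y \<otimes> z \<in> K" if "y \<in> K" "z \<in> K" for y z using that subgroup.m_closed[OF K] by blast
  have Ki: "inv y \<in> K" if "y \<in> K" for y using that subgroup.m_inv_closed[OF K] by blast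
  have TK: "T \<subseteq> K" by (rule subset_generate)
  from x r show ?thesis
  proof (induction arbitrary: r rule: generate.induct)
    case one
    then show ?case using rep_transversal[OF one] transversal_K[OF one] K_carrier generate.one by simp
  next
    case (incl s r)
    then have "(r, s) \<in> {\<one>, t} \<times> T" by simp
    then show ?case unfolding T0_def by (intro generate.incl rev_image_eqI) auto
  next
    case (inv s)
    define r' where "r' = rep (r \<otimes> inv s)"
    have s: "s \<in> K" "s \<in> carrier G" using inv TK K_carrier by auto
    have r': "r' \<in> {\<one>, t}" "r' \<in> K" unfolding r'_def using rep by auto
    have "rep (r' \<otimes> s) = r"
      unfolding r'_def using rep_mult[OF Km[OF transversal_K[OF inv(2)] Ki[OF s(1)]] s(1)] rep_transversal[OF inv(2)]
        K_carrier[OF transversal_K[OF inv(2)]] s(2) by (simp add: m_assoc)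
    moreover have "r' \<otimes> s \<otimes> inv (rep (r' \<otimes> s)) \<in> T0"
      unfolding T0_def using r'(1) inv(1) by (intro rev_image_eqI[of "(r', s)"]) auto
    ultimately have "inv (r' \<otimes> s \<otimes> inv r) \<in> generate G T0" by (metis generate.inv)
    moreover have "inv (r' \<otimes> s \<otimes> inv r) = r \<otimes> inv s \<otimes> inv r'"
      using K_carrier[OF r'(2)] K_carrier[OF transversal_K[OF inv(2)]] s(2) by (simp add: inv_mult_group m_assoc)
    ultimately show ?case unfolding r'_def by simp
  next
    case (eng x y r)
    have xy: "x \<in> K" "y \<in> K" using eng.hyps .
    have c: "r \<in> carrier G" "x \<in> carrier G" "y \<in> carrier G" "rep (r \<otimes> x) \<in> carrier G"
      using K_carrier transversal_K[OF eng.prems] xy rep(2) by auto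
    have "(r \<otimes> x \<otimes> inv (rep (r \<otimes> x))) \<otimes> (rep (r \<otimes> x) \<otimes> y \<otimes> inv (rep (rep (r \<otimes> x) \<otimes> y)))
        \<in> generate G T0"
      using eng.IH(1)[OF eng.prems] eng.IH(2)[OF rep(1)] by (rule generate.eng)
    moreover have "rep (rep (r \<otimes> x) \<otimes> y) = rep (r \<otimes> (x \<otimes> y))"
      using rep_mult[OF Km[OF transversal_K[OF eng.prems] xy(1)] xy(2)] c by (simp add: m_assoc)
    moreover have "rep (r \<otimes> (x \<otimes> y)) \<in> carrier G" using K_carrier rep(2) by blast
    moreover have "w \<otimes> inv a \<otimes> a = w" if "w \<in> carrier G" "a \<in> carrier G" for w a
      using that by (simp add: m_assoc)
    ultimately show ?case using c by (simp add: m_assoc[symmetric])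
  qed
qed

lemma T0_subset: "s \<in> T0 \<Longrightarrow> s \<in> K \<and> P s"
proof -
  assume s: "s \<in> T0"
  obtain p where p: "s = (\<lambda>(r, s). r \<otimes> s \<otimes> inv (rep (r \<otimes> s))) p" "p \<in> {\<one>, t} \<times> T"
    using s unfolding T0_def by (rule imageE)
  obtain r u where "p = (r, u)" by (cases p)
  then have ru: "r \<in> {\<one>, t}" "u \<in> T" "s = r \<otimes> u \<otimes> inv (rep (r \<otimes> u))" using p by auto
  have ruK: "r \<otimes> u \<in> K"
    using ru(1,2) transversal_K subset_generate[of T G] subgroup.m_closed[OF K] by blast
  have repK: "inv (rep (r \<otimes> u)) \<in> K" using subgroup.m_inv_closed[OF K rep(2)] .
  have "s \<in> K" using subgroup.m_closed[OF K ruK repK] ru(3) by simp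
  moreover have "P s" using P[OF ruK repK] P_inv[OF rep(2)] rep(3) ru(3) by simp
  ultimately show ?thesis ..
qed

lemma K_subset_cosets: "K \<subseteq> generate G T0 \<union> (\<lambda>z. z \<otimes> t) ` generate G T0"
proof
  fix x assume x: "x \<in> K"
  have xc: "x \<in> carrier G" and tc: "t \<in> carrier G" using x t(1) K_carrier by auto
  have mem: "x \<otimes> inv (rep x) \<in> generate G T0" using schreier_invariant[OF x, of \<one>] xc by simp
  show "x \<in> generate G T0 \<union> (\<lambda>z. z \<otimes> t) ` generate G T0"
  proof (cases "P x")
    case True
    then show ?thesis using mem xc by (simp add: rep_def)
  next
    case False
    then have "x = (x \<otimes> inv (rep x)) \<otimes> t" using xc tc by (simp add: rep_def m_assoc)
    then have "x \<in> (\<lambda>z. z \<otimes> t) ` generate G T0" by (rule rev_image_eqI[OF mem])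
    then show ?thesis by blast
  qed
qed

end

lemma (in group) finite_generate_if_finite_even_part:
  assumes T: "finite T" "T \<subseteq> carrier G"
    and P: "\<And>x y. x \<in> generate G T \<Longrightarrow> y \<in> generate G T \<Longrightarrow> P (x \<otimes> y) \<longleftrightarrow> (P x \<longleftrightarrow> P y)"
  obtains T0 where "finite T0" "T0 \<subseteq> generate G T" "\<forall>s\<in>T0. P s"
    "finite (generate G T0) \<longrightarrow> finite (generate G T)"
proof (cases "\<forall>s\<in>T. P s")
  case True
  then show ?thesis using that T(1) subset_generate[of T G] by blast
next
  case False
  then obtain t where t: "t \<in> T" "\<not> P t" by blast
  interpret S: index_two_schreier G T t P
    using T(2) generate.incl[OF t(1)] t(2) P by unfold_locales auto
  have "finite (generate G S.T0) \<longrightarrow> finite (generate G T)"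
    using S.K_subset_cosets finite_subset[of "generate G T"] finite_Un finite_imageI by metis
  moreover have "finite S.T0" unfolding S.T0_def using T(1) by simp
  ultimately show ?thesis using that S.T0_subset by blast
qed

text \<open>Since tree distances have the parity of the sum of the word lengths, an automorphism
  either preserves the parity of all word lengths or reverses it.\<close>

definition type_preserving :: "(nat list \<Rightarrow> nat list) \<Rightarrow> bool" where
  "type_preserving g \<longleftrightarrow> even (length (g []))"

lemma Nil_in_TV: "[] \<in> TV d"
  unfolding TV_def by simp

lemma type_preserving_iff:
  assumes g: "g \<in> AutT d" and x: "x \<in> TV d"
  shows "type_preserving g \<longleftrightarrow> even (length (g x) + length x)"
proof -
  have "tdist (g x) (g []) = length x" using AutT_tdist[OF g x Nil_in_TV] by (simp add: tdist_def)
  then have "even (length x + length (g x) + length (g []))"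
    using tdist_parity[of "g x" "g []"] by simp
  then show ?thesis unfolding type_preserving_def by presburger
qed

lemma type_preserving_tdist_even: "g \<in> AutT d \<Longrightarrow> type_preserving g \<Longrightarrow> x \<in> TV d \<Longrightarrow> even (tdist x (g x))"
  using type_preserving_iff[of g d x] tdist_parity[of x "g x"] by presburger

lemma type_preserving_compose:
  "g \<in> AutT d \<Longrightarrow> h \<in> AutT d \<Longrightarrow> type_preserving (compose (TV d) g h) \<longleftrightarrow> (type_preserving g \<longleftrightarrow> type_preserving h)"
  using type_preserving_iff[of g d "h []"] AutT_D(1)[of h d "[]"] Nil_in_TV[of d]
  unfolding type_preserving_def compose_def by simp presburger

text \<open>The midpoint of [] and g [] is fixed, or else lies on an axis of g.\<close>

lemma type_preserving_fixes_vertex: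
  assumes g: "g \<in> AutT d" and tp: "type_preserving g" and no_axis: "\<forall>y. \<not> on_axis d g y"
  shows "\<exists>m\<in>TV d. g m = m"
proof (rule ccontr)
  assume no_fix: "\<not> ?thesis"
  have g_Nil: "g [] \<in> TV d" using AutT_D(1)[OF g Nil_in_TV] .
  obtain k where k: "tdist [] (g []) = 2 * k"
    using type_preserving_tdist_even[OF g tp Nil_in_TV] by (metis evenE)
  obtain m where m: "m \<in> TV d" "tdist [] m = k" "tdist m (g []) = tdist [] (g []) - k"
    using tdist_geodesic_point[OF Nil_in_TV g_Nil, of k] k by auto
  have pos: "0 < tdist m (g m)" using no_fix m(1) tdist_eq_0_iff[of m "g m"] by auto
  have "tdist m (g (g m)) = 2 * tdist m (g m)"
    by (rule midpoint_on_axis[OF AutT_tree_isom[OF g] Nil_in_TV m(1) m(2)]) (use m k pos in auto)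
  then show False using no_axis m(1) pos unfolding on_axis_def by blast
qed

lemma on_axis_cong:
  assumes "\<And>x. x \<in> TV d \<Longrightarrow> f x = g x" "\<And>x. x \<in> TV d \<Longrightarrow> f x \<in> TV d" "on_axis d f y"
  shows "on_axis d g y"
proof -
  have y: "y \<in> TV d" using assms(3) unfolding on_axis_def by auto
  have "g y = f y" "g (g y) = f (f y)" using assms(1,2) y by auto
  then show ?thesis using assms(3) unfolding on_axis_def by simp
qed

context GF_subgroup
begin

lemma type_preserving_mult:
  "x \<in> H \<Longrightarrow> y \<in> H \<Longrightarrow> type_preserving (x \<otimes> y) \<longleftrightarrow> (type_preserving x \<longleftrightarrow> type_preserving y)"
  using mult_eq_compose type_preserving_compose H_carrier H_AutT_mem by simp

text \<open>If not, the type-preserving subgroup of index at most two has finitely many Schreier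
  generators, all elliptic. By Serre's lemma their fixed subtrees intersect pairwise, so by
  Helly's theorem they have a common fixed vertex, and they generate a finite group.\<close>

lemma infinite_generate_has_hyperbolic:
  assumes T: "finite T" "T \<subseteq> H" and inf: "infinite (generate G T)"
  shows "\<exists>g\<in>generate G T. \<exists>y. on_axis d g y"
proof (rule ccontr)
  let ?K = "generate G T"
  assume "\<not> ?thesis"
  then have no_axis: "\<And>g y. g \<in> ?K \<Longrightarrow> \<not> on_axis d g y" by blast
  have KH: "?K \<subseteq> H" using generate_subgroup_incl[OF T(2) H_subgroup] .
  have K: "subgroup ?K G" using generate_is_subgroup T(2) H_carrier by blast
  have TG: "T \<subseteq> carrier G" using T(2) H_carrier by blast
  have P: "type_preserving (x \<otimes> y) \<longleftrightarrow> (type_preserving x \<longleftrightarrow> type_preserving y)"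
    if "x \<in> ?K" "y \<in> ?K" for x y
    using type_preserving_mult that KH by blast
  obtain T0 where T0: "finite T0" "T0 \<subseteq> ?K" "\<forall>s\<in>T0. type_preserving s"
    and fin: "finite (generate G T0) \<longrightarrow> finite ?K"
    using finite_generate_if_finite_even_part[where P = type_preserving, OF T(1) TG P] by blast
  have T0A: "s \<in> AutT d" if "s \<in> T0" for s using that T0(2) KH H_AutT_mem by blast
  have fix_ne: "fixset d s \<noteq> {}" if s: "s \<in> T0" for s
    using type_preserving_fixes_vertex[OF T0A[OF s]] T0(2,3) s no_axis unfolding fixset_def by blast
  have pairwise: "fixset d s \<inter> fixset d s' \<noteq> {}" if s: "s \<in> T0" and s': "s' \<in> T0" for s s'
  proof
    assume "fixset d s \<inter> fixset d s' = {}"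
    then obtain y where y: "on_axis d (s \<circ> s') y"
      using hyperbolic_product_of_elliptics[OF AutT_tree_isom[OF T0A[OF s]] AutT_tree_isom[OF T0A[OF s']]
          fix_ne[OF s] fix_ne[OF s']] by blast
    have sc: "s \<in> carrier G" "s' \<in> carrier G" using s s' T0(2) KH H_carrier by auto
    have "on_axis d (s \<otimes> s') y"
      by (rule on_axis_cong[OF _ _ y]) (use sc mult_apply carrier_apply_in_TV in auto)
    moreover have "s \<otimes> s' \<in> ?K" using subgroup.m_closed[OF K] s s' T0(2) by blast
    ultimately show False using no_axis by blast
  qed
  have "finite (generate G T0)"
  proof (cases "T0 = {}")
    case True then show ?thesis using generate_empty by simp
  next
    case False
    have "(\<Inter>s\<in>T0. fixset d s) \<noteq> {}"
      by (rule tree_convex_helly[where d = d, OF T0(1) False]) (use pairwise fixset_tree_convex AutT_tree_isom T0A in auto)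
    then obtain r0 where r0: "\<forall>s\<in>T0. r0 \<in> fixset d s" by blast
    then have "r0 \<in> TV d" using False unfolding fixset_def by blast
    then show ?thesis
      using finite_generate_if_fixes_vertex[OF T0(1)] T0(2) KH r0 unfolding fixset_def by blast
  qed
  then show False using fin inf by blast
qed

end

section \<open>Direct products\<close>

locale subgroup_DirProd = group G + A: group A + B: group B
  for G (structure) and A :: "'a monoid" and B :: "'b monoid" +
  fixes H and \<phi>
  assumes H: "subgroup H G" and iso: "\<phi> \<in> iso (G\<lparr>carrier := H\<rparr>) (A \<times>\<times> B)"
begin

definition factor1 where "factor1 = {h \<in> H. snd (\<phi> h) = \<one>\<^bsub>B\<^esub>}"

definition proj1 where "proj1 h = inv_into H \<phi> (fst (\<phi> h), \<one>\<^bsub>B\<^esub>)"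

lemma group_hom_\<phi>: "group_hom (G\<lparr>carrier := H\<rparr>) (A \<times>\<times> B) \<phi>"
  using iso subgroup.subgroup_is_group[OF H is_group] DirProd_group[OF A.is_group B.is_group]
  unfolding iso_def group_hom_def group_hom_axioms_def by auto

lemma \<phi>_bij: "bij_betw \<phi> H (carrier A \<times> carrier B)"
  using iso unfolding iso_def by simp

lemma \<phi>_mult: "x \<in> H \<Longrightarrow> y \<in> H \<Longrightarrow> \<phi> (x \<otimes> y) = (fst (\<phi> x) \<otimes>\<^bsub>A\<^esub> fst (\<phi> y), snd (\<phi> x) \<otimes>\<^bsub>B\<^esub> snd (\<phi> y))"
  using group_hom.hom_mult[OF group_hom_\<phi>] by (simp add: mult_DirProd')

lemma \<phi>_one: "\<phi> \<one> = (\<one>\<^bsub>A\<^esub>, \<one>\<^bsub>B\<^esub>)"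
  using group_hom.hom_one[OF group_hom_\<phi>] by simp

lemma \<phi>_in: "x \<in> H \<Longrightarrow> fst (\<phi> x) \<in> carrier A \<and> snd (\<phi> x) \<in> carrier B"
  using \<phi>_bij bij_betwE by fastforce

lemma \<phi>_inj: "x \<in> H \<Longrightarrow> y \<in> H \<Longrightarrow> \<phi> x = \<phi> y \<Longrightarrow> x = y"
  using \<phi>_bij unfolding bij_betw_def inj_on_def by blast

lemma \<phi>_inv:
  assumes x: "x \<in> H"
  shows "\<phi> (inv x) = (inv\<^bsub>A\<^esub> fst (\<phi> x), inv\<^bsub>B\<^esub> snd (\<phi> x))"
proof -
  have "\<phi> (inv\<^bsub>G\<lparr>carrier := H\<rparr>\<^esub> x) = inv\<^bsub>A \<times>\<times> B\<^esub> (\<phi> x)"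
    using group_hom.hom_inv[OF group_hom_\<phi>] x by simp
  moreover have "inv\<^bsub>G\<lparr>carrier := H\<rparr>\<^esub> x = inv x" using m_inv_consistent[OF H x] .
  moreover have "inv\<^bsub>A \<times>\<times> B\<^esub> (fst (\<phi> x), snd (\<phi> x)) = (inv\<^bsub>A\<^esub> fst (\<phi> x), inv\<^bsub>B\<^esub> snd (\<phi> x))"
    using inv_DirProd[OF A.is_group B.is_group] \<phi>_in[OF x] by blast
  ultimately show ?thesis by simp
qed

lemma inv_into_\<phi>:
  assumes "a \<in> carrier A" "b \<in> carrier B"
  shows "inv_into H \<phi> (a, b) \<in> H \<and> \<phi> (inv_into H \<phi> (a, b)) = (a, b)"
proof -
  have "(a, b) \<in> \<phi> ` H" using \<phi>_bij assms unfolding bij_betw_def by simp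
  then show ?thesis by (simp add: inv_into_into f_inv_into_f)
qed

lemma subgroup_factor1: "subgroup factor1 G"
proof (rule subgroup.intro)
  show "factor1 \<subseteq> carrier G" unfolding factor1_def using subgroup.subset[OF H] by blast
  show "x \<otimes> y \<in> factor1" if "x \<in> factor1" "y \<in> factor1" for x y
    using that subgroup.m_closed[OF H] \<phi>_mult unfolding factor1_def by auto
  show "\<one> \<in> factor1" unfolding factor1_def using subgroup.one_closed[OF H] \<phi>_one by simp
  show "inv x \<in> factor1" if "x \<in> factor1" for x
    using that subgroup.m_inv_closed[OF H] \<phi>_inv unfolding factor1_def by auto
qed

lemma factor1_subset: "factor1 \<subseteq> H"
  unfolding factor1_def by blast

lemma factor1_nontrivial:
  assumes "carrier A \<noteq> {\<one>\<^bsub>A\<^esub>}"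
  shows "factor1 \<noteq> {\<one>}"
proof -
  obtain a where a: "a \<in> carrier A" "a \<noteq> \<one>\<^bsub>A\<^esub>" using assms A.one_closed by blast
  have "inv_into H \<phi> (a, \<one>\<^bsub>B\<^esub>) \<in> factor1" "inv_into H \<phi> (a, \<one>\<^bsub>B\<^esub>) \<noteq> \<one>"
    using inv_into_\<phi>[OF a(1) B.one_closed] a(2) \<phi>_one unfolding factor1_def by auto
  then show ?thesis by blast
qed

lemma proj1: "h \<in> H \<Longrightarrow> proj1 h \<in> H \<and> \<phi> (proj1 h) = (fst (\<phi> h), \<one>\<^bsub>B\<^esub>)"
  unfolding proj1_def using inv_into_\<phi> \<phi>_in by blast

lemma proj1_factor1:
  assumes "h \<in> factor1"
  shows "proj1 h = h"
proof (rule \<phi>_inj)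
  have h: "h \<in> H" "snd (\<phi> h) = \<one>\<^bsub>B\<^esub>" using assms unfolding factor1_def by auto
  then show "proj1 h \<in> H" "h \<in> H" using proj1 by auto
  show "\<phi> (proj1 h) = \<phi> h" using proj1 h by (simp add: prod_eq_iff)
qed

lemma image_proj1: "proj1 ` H = factor1"
proof
  show "proj1 ` H \<subseteq> factor1" unfolding factor1_def using proj1 by auto
  show "factor1 \<subseteq> proj1 ` H"
  proof
    fix h assume h: "h \<in> factor1"
    then have "h \<in> H" using factor1_subset by blast
    then show "h \<in> proj1 ` H" using proj1_factor1[OF h] by (metis imageI)
  qed
qed

lemma group_hom_proj1: "group_hom (G\<lparr>carrier := H\<rparr>) G proj1"
proof -
  have "proj1 (x \<otimes> y) = proj1 x \<otimes> proj1 y" if "x \<in> H" "y \<in> H" for x y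
  proof (rule \<phi>_inj)
    show "proj1 (x \<otimes> y) \<in> H" "proj1 x \<otimes> proj1 y \<in> H"
      using that proj1 subgroup.m_closed[OF H] by auto
    show "\<phi> (proj1 (x \<otimes> y)) = \<phi> (proj1 x \<otimes> proj1 y)"
      using that proj1 \<phi>_mult subgroup.m_closed[OF H] by simp
  qed
  then have "proj1 \<in> hom (G\<lparr>carrier := H\<rparr>) G"
    using proj1 subgroup.subset[OF H] by (auto intro!: homI)
  then show ?thesis
    using subgroup.subgroup_is_group[OF H is_group] is_group
    unfolding group_hom_def group_hom_axioms_def by blast
qed

lemma generate_image_proj1:
  assumes S: "S \<subseteq> H" "generate G S = H"
  shows "generate G (proj1 ` S) = factor1"
  using group_hom.generate_img[OF group_hom_proj1, of S] S generate_consistent[OF S(1) H] image_proj1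
  by simp

definition factor2 where "factor2 = {h \<in> H. fst (\<phi> h) = \<one>\<^bsub>A\<^esub>}"

lemma swap: "subgroup_DirProd G B A H (\<lambda>h. prod.swap (\<phi> h))"
proof -
  have "(\<lambda>h. prod.swap (\<phi> h)) \<in> iso (G\<lparr>carrier := H\<rparr>) (B \<times>\<times> A)"
    using iso_set_trans[OF iso DirProd_commute_iso_set[of A B]]
    by (simp add: comp_def case_prod_unfold prod.swap_def)
  then show ?thesis by (simp add: subgroup_DirProd_def subgroup_DirProd_axioms_def
      is_group A.is_group B.is_group H)
qed

lemma factor2_eq: "subgroup_DirProd.factor1 A H (\<lambda>h. prod.swap (\<phi> h)) = factor2"
  unfolding subgroup_DirProd.factor1_def[OF swap] factor2_def by simp

lemma factor1_eq: "subgroup_DirProd.factor2 B H (\<lambda>h. prod.swap (\<phi> h)) = factor1"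
  unfolding subgroup_DirProd.factor2_def[OF swap] factor1_def by simp

lemma factors_commute:
  assumes a: "a \<in> factor1" and b: "b \<in> factor2"
  shows "a \<otimes> b = b \<otimes> a"
proof (rule \<phi>_inj)
  have ab: "a \<in> H" "b \<in> H" using a b unfolding factor1_def factor2_def by auto
  then show "a \<otimes> b \<in> H" "b \<otimes> a \<in> H" using subgroup.m_closed[OF H] by auto
  show "\<phi> (a \<otimes> b) = \<phi> (b \<otimes> a)"
    using a b \<phi>_mult[OF ab] \<phi>_mult[OF ab(2,1)] \<phi>_in[OF ab(1)] \<phi>_in[OF ab(2)]
    unfolding factor1_def factor2_def by simp
qed

lemma factors_Int: "factor1 \<inter> factor2 \<subseteq> {\<one>}"
proof
  fix h assume "h \<in> factor1 \<inter> factor2"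
  then have h: "h \<in> H" "\<phi> h = \<phi> \<one>" unfolding factor1_def factor2_def \<phi>_one by (auto simp: prod_eq_iff)
  show "h \<in> {\<one>}" using \<phi>_inj[OF h(1) subgroup.one_closed[OF H] h(2)] by simp
qed

lemma subset_factor_products: "H \<subseteq> (\<lambda>(x, y). x \<otimes> y) ` (factor1 \<times> factor2)"
proof
  fix h assume h: "h \<in> H"
  define h2 where "h2 = inv_into H \<phi> (\<one>\<^bsub>A\<^esub>, snd (\<phi> h))"
  have h2: "h2 \<in> H" "\<phi> h2 = (\<one>\<^bsub>A\<^esub>, snd (\<phi> h))" unfolding h2_def using inv_into_\<phi> \<phi>_in[OF h] by auto
  have "proj1 h \<otimes> h2 = h"
  proof (rule \<phi>_inj)
    show "proj1 h \<otimes> h2 \<in> H" using proj1[OF h] h2(1) subgroup.m_closed[OF H] by blast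
    show "\<phi> (proj1 h \<otimes> h2) = \<phi> h"
      using \<phi>_mult[OF conjunct1[OF proj1[OF h]] h2(1)] proj1[OF h] h2(2) \<phi>_in[OF h] by simp
  qed (rule h)
  moreover have "(proj1 h, h2) \<in> factor1 \<times> factor2"
    using image_proj1 h h2 unfolding factor2_def by auto
  ultimately show "h \<in> (\<lambda>(x, y). x \<otimes> y) ` (factor1 \<times> factor2)" by (metis (no_types) case_prod_conv rev_image_eqI)
qed

end

section \<open>Finiteness of direct products in G(F, F')\<close>

context GF_subgroup
begin

lemma int_pow_apply:
  assumes x: "x \<in> carrier G" and w: "w \<in> TV d"
  shows "(x [^] (s::int)) w = (if 0 \<le> s then (x ^^ nat s) w else ((inv x) ^^ nat (- s)) w)"
proof (cases "0 \<le> s")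
  case True
  then have eq: "x [^] s = x [^] nat s" using int_pow_int[where x = x and n = "nat s"] by simp
  show ?thesis using True unfolding eq nat_pow_apply[OF x w] by simp
next
  case False
  then have "x [^] s = inv (x [^] nat (- s))" using int_pow_neg_int[OF x, of "nat (- s)"] by simp
  then have eq: "x [^] s = (inv x) [^] nat (- s)" using nat_pow_inv[OF x] by simp
  show ?thesis using False unfolding eq nat_pow_apply[OF inv_closed[OF x] w] by simp
qed

lemma subgroup_nat_pow_closed: "subgroup K G \<Longrightarrow> x \<in> K \<Longrightarrow> x [^] (n::nat) \<in> K"
  by (induction n) (simp_all add: subgroup.one_closed subgroup.m_closed)

lemma int_pow_commute: "x \<in> carrier G \<Longrightarrow> x \<otimes> x [^] (s::int) = x [^] s \<otimes> x"
  using int_pow_mult[of x 1 s] int_pow_mult[of x s 1] by (simp add: add.commute)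

lemma commuting_hyperbolic_fixing_trivial:
  assumes a: "a \<in> H" "on_axis d a y" and k: "k \<in> H" "k y = y" "a \<otimes> k = k \<otimes> a"
  shows "k = \<one>"
proof (rule carrier_eqI[OF H_carrier[OF k(1)] one_closed])
  fix w assume w: "w \<in> TV d"
  have y: "y \<in> TV d" using a(2) unfolding on_axis_def by blast
  have "x \<in> TV d \<Longrightarrow> k (a x) = a (k x)" for x
    using commute_apply[OF H_carrier[OF k(1)] H_carrier[OF a(1)] k(3)[symmetric]] by blast
  then have "k w = w"
    using commuting_hyperbolic_trivial[OF H_AutT_mem[OF k(1)] finite_singularities[OF k(1)]
        AutT_tree_isom[OF H_AutT_mem[OF a(1)]] a(2) y k(2) _ w] by blast
  then show "k w = \<one> w" using one_apply[OF w] by simp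
qed

lemma commuting_power_translates_axis:
  assumes a: "a \<in> H" "on_axis d a y" and b: "b \<in> H" "a \<otimes> b = b \<otimes> a"
  shows "\<exists>s::int. (b [^] tdist y (a y)) y = (a [^] s) y \<and> ((a [^] s) y = y \<longrightarrow> b y = y)"
proof -
  have isom: "h \<in> H \<Longrightarrow> tree_isom d h" for h using AutT_tree_isom H_AutT_mem by blast
  have ac: "a \<in> carrier G" and bc: "b \<in> carrier G" using a b H_carrier by auto
  have y: "y \<in> TV d" using a(2) unfolding on_axis_def by blast
  interpret L: hyperbolic_axis d a "inv a" y
    by unfold_locales
      (use isom a subgroup.m_inv_closed[OF H_subgroup a(1)] apply_inv_apply inv_apply_apply ac in auto)
  have "x \<in> TV d \<Longrightarrow> b (a x) = a (b x)" for x using commute_apply[OF bc ac] b(2) by simp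
  then obtain s where s: "(b ^^ L.tlen) y = L.axis_shift s y" "s = 0 \<longrightarrow> b y = y"
    using L.commuting_translates_along_axis[OF isom[OF b(1)]] by blast
  have as: "(a [^] s) y = L.axis_shift s y" using int_pow_apply[OF ac y] unfolding L.axis_shift_def by simp
  have bl: "(b [^] tdist y (a y)) y = (b ^^ L.tlen) y" using nat_pow_apply[OF bc y] L.tlen_def by simp
  show ?thesis
  proof (intro exI conjI impI)
    show "(b [^] tdist y (a y)) y = (a [^] s) y" using as bl s(1) by simp
    assume "(a [^] s) y = y"
    then show "b y = y" using as s(2) L.axis_shift_eq_y_iff[of s] by simp
  qed
qed

text \<open>If b commutes with a hyperbolic a of K, then b^l y = a^s y for the translation length l,
  so a^-s b^l fixes y and commutes with a; hence b^l = a^s lies in K.\<close>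

lemma centraliser_of_infinite_subgroup_trivial:
  assumes K: "subgroup K G" "K \<subseteq> H" and S: "finite S" "S \<subseteq> K" "generate G S = K"
    and inf: "infinite K" and b: "b \<in> H" "\<And>k. k \<in> K \<Longrightarrow> b \<otimes> k = k \<otimes> b"
    and pow: "\<And>n::nat. b [^] n \<in> K \<Longrightarrow> b [^] n = \<one>"
  shows "b = \<one>"
proof -
  obtain a y where a: "a \<in> K" and ax: "on_axis d a y"
    using infinite_generate_has_hyperbolic[OF S(1)] S(2,3) K(2) inf by blast
  have aH: "a \<in> H" and ac: "a \<in> carrier G" and bc: "b \<in> carrier G" and y: "y \<in> TV d"
    using a K(2) b(1) H_carrier ax unfolding on_axis_def by auto
  have ab: "a \<otimes> b = b \<otimes> a" using b(2)[OF a] by simp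
  obtain s :: int where "(b [^] tdist y (a y)) y = (a [^] s) y \<and> ((a [^] s) y = y \<longrightarrow> b y = y)"
    using commuting_power_translates_axis[OF aH ax b(1) ab] ..
  then have s: "(b [^] tdist y (a y)) y = (a [^] s) y" "(a [^] s) y = y \<longrightarrow> b y = y" by simp_all
  define u where "u = a [^] s"
  define v where "v = b [^] tdist y (a y)"
  have uK: "u \<in> K" unfolding u_def using subgroup_int_pow_closed[OF K(1) a] .
  have uc: "u \<in> carrier G" and vc: "v \<in> carrier G" unfolding u_def v_def using ac bc by auto
  have "inv u \<otimes> v = \<one>"
  proof (rule commuting_hyperbolic_fixing_trivial[OF aH ax])
    show "inv u \<otimes> v \<in> H"
      using uK K(2) subgroup_nat_pow_closed[OF H_subgroup b(1)] subgroup.m_closed[OF H_subgroup]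
        subgroup.m_inv_closed[OF H_subgroup] unfolding v_def by blast
    show "(inv u \<otimes> v) y = y"
      using mult_apply[OF inv_closed[OF uc] vc y] s(1) inv_apply_apply[OF uc y] unfolding u_def v_def by simp
    have au: "a \<otimes> inv u = inv u \<otimes> a"
      unfolding u_def using int_pow_commute[OF ac, of "- s"] int_pow_neg[OF ac] by simp
    have av: "a \<otimes> v = v \<otimes> a" unfolding v_def using group_commutes_pow[OF ab[symmetric] bc ac] by simp
    have "a \<otimes> (inv u \<otimes> v) = (a \<otimes> inv u) \<otimes> v" using ac uc vc by (simp add: m_assoc)
    also have "\<dots> = inv u \<otimes> (a \<otimes> v)" using ac uc vc au by (simp add: m_assoc)
    also have "\<dots> = (inv u \<otimes> v) \<otimes> a" using ac uc vc av by (simp add: m_assoc)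
    finally show "a \<otimes> (inv u \<otimes> v) = (inv u \<otimes> v) \<otimes> a" .
  qed
  then have "v = u" using inv_solve_left'[OF one_closed uc vc] uc by simp
  then have "u = \<one>" using pow[of "tdist y (a y)"] uK unfolding v_def by simp
  then have "b y = y" using s one_apply[OF y] unfolding u_def by simp
  then show ?thesis by (rule commuting_hyperbolic_fixing_trivial[OF aH ax b(1) _ ab])
qed

lemma finite_factor1:
  fixes A :: "'a monoid" and B :: "'b monoid"
  assumes D: "subgroup_DirProd G A B H \<phi>" and S: "finite S" "S \<subseteq> H" "generate G S = H"
    and nontrivial: "subgroup_DirProd.factor2 A H \<phi> \<noteq> {\<one>}"
  shows "finite (subgroup_DirProd.factor1 B H \<phi>)"
proof (rule ccontr)
  interpret D: subgroup_DirProd G A B H \<phi> by (rule D)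
  assume inf: "infinite D.factor1"
  have sub2: "subgroup D.factor2 G"
    using subgroup_DirProd.subgroup_factor1[OF D.swap] D.factor2_eq by simp
  obtain b where b: "b \<in> D.factor2" "b \<noteq> \<one>"
    using nontrivial subgroup.one_closed[OF sub2] by blast
  have "b = \<one>"
  proof (rule centraliser_of_infinite_subgroup_trivial[OF D.subgroup_factor1 D.factor1_subset])
    show "finite (D.proj1 ` S)" "D.proj1 ` S \<subseteq> D.factor1" "generate G (D.proj1 ` S) = D.factor1"
      using S D.image_proj1 D.generate_image_proj1[OF S(2,3)] by auto
    show "infinite D.factor1" by (rule inf)
    show "b \<in> H" using b(1) unfolding D.factor2_def by blast
    show "b \<otimes> k = k \<otimes> b" if "k \<in> D.factor1" for k using D.factors_commute[OF that b(1)] by simp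
    show "b [^] n = \<one>" if "b [^] n \<in> D.factor1" for n :: nat
      using that D.factors_Int subgroup_nat_pow_closed[OF sub2 b(1)] by blast
  qed
  then show False using b(2) by simp
qed

lemma finite_if_iso_DirProd:
  fixes A :: "'a monoid" and B :: "'b monoid"
  assumes S: "finite S" "S \<subseteq> H" "generate G S = H" and AB: "group A" "group B"
    and nontrivial: "carrier A \<noteq> {\<one>\<^bsub>A\<^esub>}" "carrier B \<noteq> {\<one>\<^bsub>B\<^esub>}"
    and iso: "G\<lparr>carrier := H\<rparr> \<cong> A \<times>\<times> B"
  shows "finite H"
proof -
  obtain \<phi> where \<phi>: "\<phi> \<in> Group.iso (G\<lparr>carrier := H\<rparr>) (A \<times>\<times> B)" using iso unfolding is_iso_def by blast
  interpret D: subgroup_DirProd G A B H \<phi>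
    using \<phi> AB H_subgroup by (simp add: subgroup_DirProd_def subgroup_DirProd_axioms_def is_group)
  interpret D': subgroup_DirProd G B A H "\<lambda>h. prod.swap (\<phi> h)" by (rule D.swap)
  have "finite D.factor1"
    using finite_factor1[OF D.subgroup_DirProd_axioms S] D.factor2_eq D'.factor1_nontrivial[OF nontrivial(2)]
    by simp
  moreover have "finite D.factor2"
    using finite_factor1[OF D.swap S] D.factor2_eq D.factor1_eq D.factor1_nontrivial[OF nontrivial(1)]
    by simp
  ultimately show ?thesis using D.subset_factor_products finite_subset by blast
qed

end

text \<open>Only H \<subseteq> G(F) and the freeness of F are used.\<close>

theorem lemma2p4:
  fixes d :: nat and c :: "nat list set \<Rightarrow> nat"
    and F F' :: "(nat \<Rightarrow> nat) set" and H :: "(nat list \<Rightarrow> nat list) set"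
    and A :: "'a monoid" and B :: "'b monoid"
  assumes "d \<ge> 3"
    and "legal_coloring d c"
    and "subgroup F (BijGroup (Omg d))" and "subgroup F' (BijGroup (Omg d))" and "F \<subseteq> F'"
    and "preserves_orbits (Omg d) F F'"
    and "acts_freely (Omg d) F"
    and "subgroup H (BijGroup (TV d))" and "H \<subseteq> GFF d c F F'"
    and "\<exists>S. finite S \<and> S \<subseteq> H \<and> generate (BijGroup (TV d)) S = H"
    and "group A" and "group B"
    and "carrier A \<noteq> {\<one>\<^bsub>A\<^esub>}" and "carrier B \<noteq> {\<one>\<^bsub>B\<^esub>}"
    and "(BijGroup (TV d))\<lparr>carrier := H\<rparr> \<cong> A \<times>\<times> B"
  shows "finite H"
proof -
  have C: "free_colouring d c F"
    using assms(2,3,7) by (simp add: free_colouring_def free_colouring_axioms_def coloured_tree_def)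
  have "GF_subgroup d c F (BijGroup (TV d)) H"
  proof (rule GF_subgroup.intro[OF C group_BijGroup])
    show "GF_subgroup_axioms d c F (BijGroup (TV d)) H"
      using assms(8,9) unfolding GF_subgroup_axioms_def GFF_def G_grp_def
        free_colouring.singularities_def[OF C] by auto
  qed
  then interpret GF_subgroup d c F "BijGroup (TV d)" H .
  obtain S where "finite S" "S \<subseteq> H" "generate (BijGroup (TV d)) S = H" using assms(10) by blast
  then show ?thesis using finite_if_iso_DirProd assms(11-15) by blast
qed

end
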